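(* Assume $\|\varphi\|_{C^2([a,b])}<1$. Then there is a constant $C>0$ depending only on $\|w\|_{C^2([a,b])}$ such that, for every $s\in[0,1]$, every $x\in\mathbb R$ and every $0\le t\le t_0(s,x)$, $$|\partial_x\xi(t,x)-1|\le C\|\varphi\|_{C^2([a,b])},\qquad|\partial_x\eta(t,x)-w'(x)|\le C\|\varphi\|_{C^2([a,b])}.$$
   Context: Let $w\in C^3(\mathbb R)$ be periodic with $w>0$ on $[-1,1]$. Let $-1<a<b<1$ and let $\varphi:[a,b]\to\mathbb R$ be a polynomial with $\varphi^{(k)}(a)=\varphi^{(k)}(b)=0$ for $k=0,1,2,3$, extended by zero outside $[a,b]$. For $x\in\mathbb R$, $(\xi(t,x),\eta(t,x))$ is the unique global solution of $$\frac{d\xi}{dt}=-w'(\xi)\varphi(\xi)-(\eta-w(\xi))\varphi'(\xi),\quad\frac{d\eta}{dt}=\varphi(\xi),\quad \xi(0)=x,\ \eta(0)=w(x).$$ For $s\in[0,1]$, $t_0(s,x)\ge0$ denotes the first time $t\ge0$ with $\eta(t,x)=w(\xi(t,x))+s\varphi(\xi(t,x))$ (it exists and $t_0(s,x)\le s$). *)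

theory Defs
  imports "HOL-Analysis.Analysis" "HOL-Computational_Algebra.Polynomial"
begin

definition ext_poly :: "real poly \<Rightarrow> real \<Rightarrow> real \<Rightarrow> real \<Rightarrow> real" where
  "ext_poly p a b x = (if a \<le> x \<and> x \<le> b then poly p x else 0)"

definition supnorm_on :: "(real \<Rightarrow> real) \<Rightarrow> real \<Rightarrow> real \<Rightarrow> real" where
  "supnorm_on f a b = Sup ((\<lambda>x. \<bar>f x\<bar>) ` {a..b})"

definition C2norm_on :: "(real \<Rightarrow> real) \<Rightarrow> (real \<Rightarrow> real) \<Rightarrow> (real \<Rightarrow> real) \<Rightarrow> real \<Rightarrow> real \<Rightarrow> real" where
  "C2norm_on f f1 f2 a b = supnorm_on f a b + supnorm_on f1 a b + supnorm_on f2 a b"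

definition polyC2norm :: "real poly \<Rightarrow> real \<Rightarrow> real \<Rightarrow> real" where
  "polyC2norm p a b = C2norm_on (poly p) (poly (pderiv p)) (poly (pderiv (pderiv p))) a b"

definition first_time ::
  "(real \<Rightarrow> real \<Rightarrow> real) \<Rightarrow> (real \<Rightarrow> real \<Rightarrow> real) \<Rightarrow> (real \<Rightarrow> real) \<Rightarrow> (real \<Rightarrow> real)
     \<Rightarrow> real \<Rightarrow> real \<Rightarrow> real" where
  "first_time xi eta w phi s x =
     Inf {t. 0 \<le> t \<and> eta t x = w (xi t x) + s * phi (xi t x)}"

end

theory Submission
  imports Defs
begin

text \<open>Outside \<open>[a, b]\<close> the flow is the identity, and \<open>[a, b]\<close> is invariant, so along every
  trajectory that matters \<open>\<phi>, \<phi>', \<phi>''\<close> are bounded by \<open>N = \<parallel>\<phi>\<parallel>\<^sub>C\<^sub>2\<close>. Gronwall's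
  inequality then makes the gap \<open>eta - w \<circ> xi\<close> of size \<open>O(N)\<close> up to time 1, and the first
  hitting time is at most \<open>s \<le> 1\<close> because \<open>(eta - w \<circ> xi) / \<phi> \<circ> xi\<close> grows at least at unit
  speed. The difference quotients of \<open>(xi, eta)\<close> in the initial point solve, up to a residual
  that is small uniformly in time, the linearised system, whose coefficients are \<open>O(N)\<close>. By
  Gronwall they form a Cauchy family as the increment tends to 0, so the derivatives exist, and
  comparing with the constant solution \<open>(1, w')\<close> of the unperturbed system gives the bound.\<close>

lemma has_real_derivative_zero_extension:
  fixes g g' :: "real \<Rightarrow> real"
  assumes g: "\<And>y. (g has_real_derivative g' y) (at y)"
    and "g a = 0" "g b = 0" "g' a = 0" "g' b = 0" "a \<le> b"
  shows "((\<lambda>y. if y \<in> {a..b} then g y else 0) has_real_derivative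
           (if x \<in> {a..b} then g' x else 0)) (at x)"
proof -
  have ends: "x = a \<or> x = b" if "x \<in> closure (- {a..b})" "x \<in> {a..b}" for x
    using that by (auto simp: closure_complement)
  have "((\<lambda>y. if y \<in> {a..b} then g y else 0) has_vector_derivative
           (if x \<in> {a..b} then g' x else 0)) (at x within UNIV)"
    by (rule has_vector_derivative_If_within_closures[where T = "- {a..b}"])
       (use assms in \<open>auto dest: ends simp: closure_complement
          has_real_derivative_iff_has_vector_derivative[symmetric] intro: has_field_derivative_at_within\<close>)
  then show ?thesis by (simp add: has_real_derivative_iff_has_vector_derivative)
qed

lemma MVT_between:
  fixes g g' :: "real \<Rightarrow> real"
  assumes "\<And>x. (g has_real_derivative g' x) (at x)"
  obtains c where "min y z \<le> c" "c \<le> max y z" "g y - g z = g' c * (y - z)"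
proof (cases y z rule: linorder_cases)
  case less
  with MVT2[of y z g g'] assms obtain c where "y < c" "c < z" "g z - g y = (z - y) * g' c"
    by blast
  then show ?thesis by (intro that[of c]) (auto simp: algebra_simps)
next
  case greater
  with MVT2[of z y g g'] assms obtain c where "z < c" "c < y" "g y - g z = (y - z) * g' c"
    by blast
  then show ?thesis by (intro that[of c]) (auto simp: algebra_simps)
qed (use that in auto)

lemma continuous_on_Icc_abs_bounded:
  fixes g :: "real \<Rightarrow> real"
  assumes "continuous_on {lo..hi} g"
  obtains B where "B \<ge> 0" "\<And>x. x \<in> {lo..hi} \<Longrightarrow> \<bar>g x\<bar> \<le> B"
proof -
  have "bounded (g ` {lo..hi})"
    by (rule compact_imp_bounded[OF compact_continuous_image[OF assms compact_Icc]])
  then obtain B where "\<forall>y\<in>g ` {lo..hi}. norm y \<le> B" unfolding bounded_iff by blast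
  then show ?thesis by (intro that[of "max B 0"]) (auto simp: le_max_iff_disj)
qed

lemma lipschitz_on_Icc_of_continuous_deriv:
  fixes g g' :: "real \<Rightarrow> real"
  assumes g: "\<And>x. (g has_real_derivative g' x) (at x)"
    and "continuous_on {lo..hi} g'"
  obtains L where "L \<ge> 0" "\<And>y z. y \<in> {lo..hi} \<Longrightarrow> z \<in> {lo..hi} \<Longrightarrow> \<bar>g y - g z\<bar> \<le> L * \<bar>y - z\<bar>"
proof -
  obtain B where B: "B \<ge> 0" "\<And>x. x \<in> {lo..hi} \<Longrightarrow> \<bar>g' x\<bar> \<le> B"
    using continuous_on_Icc_abs_bounded[OF assms(2)] by blast
  have "\<bar>g y - g z\<bar> \<le> B * \<bar>y - z\<bar>" if "y \<in> {lo..hi}" "z \<in> {lo..hi}" for y z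
  proof -
    obtain c where c: "min y z \<le> c" "c \<le> max y z" "g y - g z = g' c * (y - z)"
      using MVT_between[OF g] by blast
    with that have "\<bar>g' c\<bar> \<le> B" by (intro B(2)) auto
    then show ?thesis unfolding c(3) abs_mult by (simp add: mult_right_mono)
  qed
  with B(1) show ?thesis by (rule that)
qed

lemma uniformly_differentiable_on_Icc:
  fixes g g' :: "real \<Rightarrow> real"
  assumes g: "\<And>x. (g has_real_derivative g' x) (at x)"
    and "continuous_on {lo..hi} g'" and "e > 0"
  obtains d where "d > 0" "\<And>y z. y \<in> {lo..hi} \<Longrightarrow> z \<in> {lo..hi} \<Longrightarrow> \<bar>y - z\<bar> < d \<Longrightarrow>
            \<bar>g y - g z - g' z * (y - z)\<bar> \<le> e * \<bar>y - z\<bar>"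
proof -
  have "uniformly_continuous_on {lo..hi} g'"
    by (rule compact_uniformly_continuous[OF assms(2) compact_Icc])
  then obtain d where d: "d > 0"
    "\<And>x x'. x \<in> {lo..hi} \<Longrightarrow> x' \<in> {lo..hi} \<Longrightarrow> dist x' x < d \<Longrightarrow> dist (g' x') (g' x) < e"
    unfolding uniformly_continuous_on_def using \<open>e > 0\<close> by metis
  have "\<bar>g y - g z - g' z * (y - z)\<bar> \<le> e * \<bar>y - z\<bar>"
    if "y \<in> {lo..hi}" "z \<in> {lo..hi}" "\<bar>y - z\<bar> < d" for y z
  proof -
    obtain c where c: "min y z \<le> c" "c \<le> max y z" "g y - g z = g' c * (y - z)"
      using MVT_between[OF g] by blast
    with that have "c \<in> {lo..hi}" "dist c z < d" by (auto simp: dist_real_def)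
    with that have "\<bar>g' c - g' z\<bar> < e" using d(2)[of z c] by (simp add: dist_real_def)
    then have "\<bar>g' c - g' z\<bar> * \<bar>y - z\<bar> \<le> e * \<bar>y - z\<bar>" by (simp add: mult_right_mono)
    moreover have "g y - g z - g' z * (y - z) = (g' c - g' z) * (y - z)"
      using c(3) by (simp add: algebra_simps)
    ultimately show ?thesis by (simp add: abs_mult)
  qed
  with d(1) show ?thesis by (rule that)
qed

text \<open>First-order expansion of \<open>(y, e) \<mapsto> A y + e * B y\<close>; the remainder is uniform because
  it only involves the moduli of continuity of \<open>A'\<close> and \<open>B'\<close> and a Lipschitz constant of \<open>B\<close>.\<close>

lemma uniform_linearization_affine:
  fixes A A' B B' :: "real \<Rightarrow> real"
  assumes A: "\<And>y. (A has_real_derivative A' y) (at y)" "continuous_on {lo..hi} A'"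
    and B: "\<And>y. (B has_real_derivative B' y) (at y)" "continuous_on {lo..hi} B'"
    and "\<epsilon> > 0" "R \<ge> 0"
  obtains \<delta> where "\<delta> > 0"
    "\<And>y0 y1 e0 e1. y0 \<in> {lo..hi} \<Longrightarrow> y1 \<in> {lo..hi} \<Longrightarrow> \<bar>e0\<bar> \<le> R \<Longrightarrow> \<bar>y1 - y0\<bar> < \<delta> \<Longrightarrow>
      \<bar>(A y1 + e1 * B y1) - (A y0 + e0 * B y0) - ((A' y0 + e0 * B' y0) * (y1 - y0) + B y0 * (e1 - e0))\<bar>
        \<le> \<epsilon> * (\<bar>y1 - y0\<bar> + \<bar>e1 - e0\<bar>)"
proof -
  define \<epsilon>' where "\<epsilon>' = \<epsilon> / (R + 1)"
  have "\<epsilon>' + R * \<epsilon>' = (R + 1) * \<epsilon>'" by (simp add: algebra_simps)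
  then have \<epsilon>': "\<epsilon>' > 0" "\<epsilon>' + R * \<epsilon>' = \<epsilon>"
    using assms(5,6) by (simp_all add: \<epsilon>'_def)
  obtain dA where dA: "dA > 0" "\<And>y z. y \<in> {lo..hi} \<Longrightarrow> z \<in> {lo..hi} \<Longrightarrow> \<bar>y - z\<bar> < dA \<Longrightarrow>
      \<bar>A y - A z - A' z * (y - z)\<bar> \<le> \<epsilon>' * \<bar>y - z\<bar>"
    using uniformly_differentiable_on_Icc[OF A \<epsilon>'(1)] by blast
  obtain dB where dB: "dB > 0" "\<And>y z. y \<in> {lo..hi} \<Longrightarrow> z \<in> {lo..hi} \<Longrightarrow> \<bar>y - z\<bar> < dB \<Longrightarrow>
      \<bar>B y - B z - B' z * (y - z)\<bar> \<le> \<epsilon>' * \<bar>y - z\<bar>"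
    using uniformly_differentiable_on_Icc[OF B \<epsilon>'(1)] by blast
  obtain L where L: "L \<ge> 0" "\<And>y z. y \<in> {lo..hi} \<Longrightarrow> z \<in> {lo..hi} \<Longrightarrow> \<bar>B y - B z\<bar> \<le> L * \<bar>y - z\<bar>"
    using lipschitz_on_Icc_of_continuous_deriv[OF B] by blast
  define \<delta> where "\<delta> = min (min dA dB) (\<epsilon> / (L + 1))"
  have "\<delta> > 0" using dA dB L assms(5) by (simp add: \<delta>_def)
  moreover have "\<bar>(A y1 + e1 * B y1) - (A y0 + e0 * B y0) - ((A' y0 + e0 * B' y0) * (y1 - y0) + B y0 * (e1 - e0))\<bar>
        \<le> \<epsilon> * (\<bar>y1 - y0\<bar> + \<bar>e1 - e0\<bar>)"
    if y: "y0 \<in> {lo..hi}" "y1 \<in> {lo..hi}" and e0: "\<bar>e0\<bar> \<le> R" and close: "\<bar>y1 - y0\<bar> < \<delta>"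
    for y0 y1 e0 e1
  proof -
    define rA where "rA = A y1 - A y0 - A' y0 * (y1 - y0)"
    define rB where "rB = B y1 - B y0 - B' y0 * (y1 - y0)"
    have rA: "\<bar>rA\<bar> \<le> \<epsilon>' * \<bar>y1 - y0\<bar>" unfolding rA_def using dA(2)[OF y(2,1)] close by (simp add: \<delta>_def)
    have rB: "\<bar>rB\<bar> \<le> \<epsilon>' * \<bar>y1 - y0\<bar>" unfolding rB_def using dB(2)[OF y(2,1)] close by (simp add: \<delta>_def)
    have "\<bar>e0 * rB\<bar> \<le> R * (\<epsilon>' * \<bar>y1 - y0\<bar>)"
      unfolding abs_mult using e0 rB by (intro mult_mono) auto
    moreover have "\<bar>(e1 - e0) * (B y1 - B y0)\<bar> \<le> \<bar>e1 - e0\<bar> * \<epsilon>"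
    proof -
      have "L * \<bar>y1 - y0\<bar> \<le> (L + 1) * (\<epsilon> / (L + 1))"
        using close L(1) by (intro mult_mono) (auto simp: \<delta>_def)
      then have "\<bar>B y1 - B y0\<bar> \<le> \<epsilon>" using L(1) L(2)[OF y(2,1)] by simp
      then show ?thesis unfolding abs_mult by (simp add: mult_left_mono)
    qed
    moreover have "\<epsilon>' * \<bar>y1 - y0\<bar> + R * (\<epsilon>' * \<bar>y1 - y0\<bar>) + \<bar>e1 - e0\<bar> * \<epsilon>
        = \<epsilon> * (\<bar>y1 - y0\<bar> + \<bar>e1 - e0\<bar>)"
      unfolding \<epsilon>'(2)[symmetric] by (simp add: algebra_simps)
    ultimately have "\<bar>rA + e0 * rB + (e1 - e0) * (B y1 - B y0)\<bar> \<le> \<epsilon> * (\<bar>y1 - y0\<bar> + \<bar>e1 - e0\<bar>)"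
      using rA by linarith
    moreover have "(A y1 + e1 * B y1) - (A y0 + e0 * B y0) - ((A' y0 + e0 * B' y0) * (y1 - y0) + B y0 * (e1 - e0))
        = rA + e0 * rB + (e1 - e0) * (B y1 - B y0)"
      by (simp add: rA_def rB_def algebra_simps)
    ultimately show ?thesis by simp
  qed
  ultimately show ?thesis by (rule that)
qed

lemma convergent_at_0_Cauchy:
  fixes f :: "real \<Rightarrow> real"
  assumes "\<And>e. e > 0 \<Longrightarrow> \<exists>d>0. \<forall>h k. 0 < \<bar>h\<bar> \<longrightarrow> \<bar>h\<bar> < d \<longrightarrow> 0 < \<bar>k\<bar> \<longrightarrow> \<bar>k\<bar> < d \<longrightarrow> \<bar>f h - f k\<bar> < e"
  obtains c where "(f \<longlongrightarrow> c) (at 0)"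
proof -
  have "cauchy_filter (filtermap f (at 0))"
    unfolding cauchy_filter_metric_filtermap
  proof (intro allI impI)
    fix e :: real assume "e > 0"
    then obtain d where "d > 0" and d: "\<forall>h k. 0 < \<bar>h\<bar> \<longrightarrow> \<bar>h\<bar> < d \<longrightarrow> 0 < \<bar>k\<bar> \<longrightarrow> \<bar>k\<bar> < d \<longrightarrow> \<bar>f h - f k\<bar> < e"
      using assms by blast
    have "eventually (\<lambda>h. 0 < \<bar>h\<bar> \<and> \<bar>h\<bar> < d) (at (0::real))"
      unfolding eventually_at using \<open>d > 0\<close> by (auto simp: dist_real_def)
    with d show "\<exists>P. eventually P (at 0) \<and> (\<forall>x y. P x \<and> P y \<longrightarrow> dist (f x) (f y) < e)"
      by (auto simp: dist_real_def)
  qed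
  then obtain c where "filtermap f (at 0) \<le> nhds c"
    using cauchy_filter_complete_converges[of "filtermap f (at (0::real))" UNIV] complete_UNIV
    by (auto simp: filtermap_bot_iff)
  then show ?thesis using that unfolding filterlim_def by blast
qed

text \<open>If the curve moved, the last time \<open>\<tau>\<close> at which it is at its initial point would be
  followed by a short interval spent in \<open>U\<close>, hence at rest.\<close>

lemma stationary_while_in_open:
  fixes f f' :: "real \<Rightarrow> real"
  assumes df: "\<And>t. (f has_real_derivative f' t) (at t)"
    and U: "open U" "f 0 \<in> U" and zero: "\<And>t. f t \<in> U \<Longrightarrow> f' t = 0"
    and "0 \<le> t1"
  shows "f t1 = f 0"
proof (rule ccontr)
  assume moved: "f t1 \<noteq> f 0"
  have contf: "continuous_on UNIV f"
    using df by (meson DERIV_continuous continuous_at_imp_continuous_on)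
  define S where "S = {0..t1} \<inter> f -` {f 0}"
  have "closed S"
    unfolding S_def by (intro closed_Int closed_vimage closed_atLeastAtMost closed_singleton contf)
  moreover have "0 \<in> S" "bdd_above S" using \<open>0 \<le> t1\<close> by (auto simp: S_def)
  ultimately have "Sup S \<in> S" using closed_contains_Sup by blast
  define \<tau> where "\<tau> = Sup S"
  have f\<tau>: "f \<tau> = f 0" and "0 \<le> \<tau>" "\<tau> < t1"
    using \<open>Sup S \<in> S\<close> moved unfolding \<tau>_def S_def by (auto simp: order.order_iff_strict)
  obtain e where "e > 0" and e: "ball (f \<tau>) e \<subseteq> U"
    using U f\<tau> open_contains_ball by metis
  moreover obtain d where "d > 0" and d: "\<And>y. dist y \<tau> < d \<Longrightarrow> dist (f y) (f \<tau>) < e"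
    using \<open>e > 0\<close> contf unfolding continuous_on_eq_continuous_at[OF open_UNIV] continuous_at_eps_delta
    by blast
  ultimately have inU: "f y \<in> U" if "dist y \<tau> < d" for y
    using that e d[of y] by (auto simp: dist_commute)
  define \<tau>' where "\<tau>' = min t1 (\<tau> + d/2)"
  have "\<tau> < \<tau>'" using \<open>\<tau> < t1\<close> \<open>d > 0\<close> by (simp add: \<tau>'_def)
  have "f \<tau>' = f \<tau>"
  proof (rule DERIV_isconst_end[OF \<open>\<tau> < \<tau>'\<close>])
    show "continuous_on {\<tau>..\<tau>'} f" using contf by (rule continuous_on_subset) simp
    fix y assume "\<tau> < y" "y < \<tau>'"
    then have "f y \<in> U" using \<open>d > 0\<close> by (intro inU) (auto simp: \<tau>'_def dist_real_def)
    then show "(f has_real_derivative 0) (at y)" using df[of y] zero by simp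
  qed
  then have "\<tau>' \<in> S" using \<open>0 \<le> \<tau>\<close> \<open>\<tau> < \<tau>'\<close> f\<tau> by (auto simp: S_def \<tau>'_def)
  then have "\<tau>' \<le> \<tau>" unfolding \<tau>_def using \<open>bdd_above S\<close> by (rule cSup_upper)
  with \<open>\<tau> < \<tau>'\<close> show False by simp
qed

lemma DERIV_le_mult_imp_le_exp:
  fixes W W' :: "real \<Rightarrow> real"
  assumes dW: "\<And>t. (W has_real_derivative W' t) (at t)"
    and le: "\<And>t. t \<in> {0..T} \<Longrightarrow> W' t \<le> k * W t" and t: "t \<in> {0..T}"
  shows "W t \<le> W 0 * exp (k * t)"
proof -
  define V where "V = (\<lambda>t. W t * exp (- k * t))"
  have dV: "(V has_real_derivative (W' s - k * W s) * exp (- k * s)) (at s)" for s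
    unfolding V_def by (auto intro!: derivative_eq_intros dW simp: algebra_simps)
  have "V t \<le> V 0"
  proof (rule DERIV_nonpos_imp_nonincreasing[of 0 t V])
    fix s assume "0 \<le> s" "s \<le> t"
    with t le[of s] dV[of s] show "\<exists>y. (V has_real_derivative y) (at s) \<and> y \<le> 0"
      by (auto intro!: exI mult_nonpos_nonneg)
  qed (use t in simp)
  then show ?thesis by (simp add: V_def exp_minus field_simps)
qed

lemma lyapunov_derivative_le:
  fixes f g f' g' L c :: real
  assumes bd: "\<bar>f'\<bar> + \<bar>g'\<bar> \<le> L * (\<bar>f\<bar> + \<bar>g\<bar>) + c" and "L \<ge> 0"
  shows "2 * f * f' + 2 * g * g' \<le> (4 * L + 2) * (f\<^sup>2 + g\<^sup>2 + c\<^sup>2)"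
proof -
  define S where "S = \<bar>f\<bar> + \<bar>g\<bar>"
  have S_sq: "S\<^sup>2 \<le> 2 * (f\<^sup>2 + g\<^sup>2)"
    using sum_squares_bound[of "\<bar>f\<bar>" "\<bar>g\<bar>"] unfolding S_def by (simp add: power2_sum)
  have "2 * f * f' + 2 * g * g' \<le> 2 * S * (\<bar>f'\<bar> + \<bar>g'\<bar>)"
    using abs_ge_self[of "f * f'"] abs_ge_self[of "g * g'"]
      mult_nonneg_nonneg[of "\<bar>f\<bar>" "\<bar>g'\<bar>"] mult_nonneg_nonneg[of "\<bar>g\<bar>" "\<bar>f'\<bar>"]
    unfolding S_def abs_mult by (smt (verit) abs_ge_zero distrib_left distrib_right)
  also have "\<dots> \<le> 2 * S * (L * S + c)"
    using bd by (intro mult_left_mono) (auto simp: S_def)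
  also have "\<dots> \<le> 2 * L * S\<^sup>2 + (S\<^sup>2 + c\<^sup>2)"
    using sum_squares_bound[of S c] by (simp add: algebra_simps power2_eq_square)
  also have "\<dots> \<le> (4 * L + 2) * (f\<^sup>2 + g\<^sup>2 + c\<^sup>2)"
  proof -
    have "2 * L * S\<^sup>2 \<le> 4 * L * (f\<^sup>2 + g\<^sup>2)"
      using mult_left_mono[OF S_sq, of "2 * L"] \<open>L \<ge> 0\<close> by (simp add: algebra_simps)
    moreover have "0 \<le> 4 * L * c\<^sup>2" using \<open>L \<ge> 0\<close> by simp
    moreover have "(4 * L + 2) * (f\<^sup>2 + g\<^sup>2 + c\<^sup>2) = 4 * L * (f\<^sup>2 + g\<^sup>2) + 4 * L * c\<^sup>2 + 2 * (f\<^sup>2 + g\<^sup>2) + 2 * c\<^sup>2"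
      by (simp add: algebra_simps)
    ultimately show ?thesis using S_sq zero_le_power2[of c] by linarith
  qed
  finally show ?thesis .
qed

text \<open>Gronwall's inequality for a pair of functions, through the Lyapunov function
  \<open>f\<^sup>2 + g\<^sup>2 + c\<^sup>2\<close>.\<close>

lemma gronwall_abs_sum:
  fixes f g f' g' :: "real \<Rightarrow> real"
  assumes df: "\<And>t. (f has_real_derivative f' t) (at t)"
    and dg: "\<And>t. (g has_real_derivative g' t) (at t)"
    and bd: "\<And>t. t \<in> {0..T} \<Longrightarrow> \<bar>f' t\<bar> + \<bar>g' t\<bar> \<le> L * (\<bar>f t\<bar> + \<bar>g t\<bar>) + c"
    and "L \<ge> 0" "c \<ge> 0" and t: "t \<in> {0..T}"
  shows "\<bar>f t\<bar> + \<bar>g t\<bar> \<le> 2 * (\<bar>f 0\<bar> + \<bar>g 0\<bar> + c) * exp ((2 * L + 1) * t)"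
proof -
  define W where "W = (\<lambda>t. (f t)\<^sup>2 + (g t)\<^sup>2 + c\<^sup>2)"
  define S where "S = (\<lambda>t. \<bar>f t\<bar> + \<bar>g t\<bar>)"
  have S_sq: "(S s)\<^sup>2 \<le> 2 * ((f s)\<^sup>2 + (g s)\<^sup>2)" for s
    using sum_squares_bound[of "\<bar>f s\<bar>" "\<bar>g s\<bar>"] unfolding S_def by (simp add: power2_sum)
  have dW: "(W has_real_derivative 2 * f s * f' s + 2 * g s * g' s) (at s)" for s
    unfolding W_def by (auto intro!: derivative_eq_intros df dg)
  have "W t \<le> W 0 * exp ((4 * L + 2) * t)"
    by (rule DERIV_le_mult_imp_le_exp[OF dW _ t])
       (unfold W_def, rule lyapunov_derivative_le[OF bd \<open>L \<ge> 0\<close>])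
  also have "\<dots> \<le> (S 0 + c)\<^sup>2 * exp ((4 * L + 2) * t)"
    using \<open>c \<ge> 0\<close> by (intro mult_right_mono) (auto simp: W_def S_def power2_eq_square algebra_simps)
  finally have "(S t)\<^sup>2 \<le> 2 * (S 0 + c)\<^sup>2 * exp ((4 * L + 2) * t)"
    using S_sq[of t] zero_le_power2[of c] unfolding W_def by argo
  also have "\<dots> \<le> 4 * (S 0 + c)\<^sup>2 * exp (2 * ((2 * L + 1) * t))"
  proof -
    have e: "2 * ((2 * L + 1) * t) = (4 * L + 2) * t" by (simp add: algebra_simps)
    show ?thesis unfolding e by (rule mult_right_mono) simp_all
  qed
  also have "\<dots> = (2 * (S 0 + c) * exp ((2 * L + 1) * t))\<^sup>2"
    by (simp only: exp_double power_mult_distrib) simp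
  finally have "(S t)\<^sup>2 \<le> (2 * (S 0 + c) * exp ((2 * L + 1) * t))\<^sup>2" .
  then show ?thesis
    using power2_le_imp_le \<open>c \<ge> 0\<close> unfolding S_def by (metis abs_ge_zero add_nonneg_nonneg exp_ge_zero
      mult_nonneg_nonneg zero_le_numeral)
qed

lemma linear_system_gronwall:
  fixes f g a11 a12 a21 r1 r2 :: "real \<Rightarrow> real"
  assumes df: "\<And>t. (f has_real_derivative a11 t * f t + a12 t * g t + r1 t) (at t)"
    and dg: "\<And>t. (g has_real_derivative a21 t * f t + r2 t) (at t)"
    and coeff: "\<And>t. t \<in> {0..T} \<Longrightarrow> \<bar>a11 t\<bar> + \<bar>a21 t\<bar> \<le> L" "\<And>t. t \<in> {0..T} \<Longrightarrow> \<bar>a12 t\<bar> \<le> L"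
    and rem: "\<And>t. t \<in> {0..T} \<Longrightarrow> \<bar>r1 t\<bar> + \<bar>r2 t\<bar> \<le> c"
    and t: "t \<in> {0..T}"
  shows "\<bar>f t\<bar> + \<bar>g t\<bar> \<le> 2 * (\<bar>f 0\<bar> + \<bar>g 0\<bar> + c) * exp ((2 * L + 1) * t)"
proof (rule gronwall_abs_sum[OF df dg _ _ _ t])
  have "0 \<in> {0..T}" using t by simp
  from coeff(1)[OF this] rem[OF this] show "L \<ge> 0" "c \<ge> 0" by linarith+
  fix s assume s: "s \<in> {0..T}"
  have "\<bar>a11 s * f s\<bar> + \<bar>a21 s * f s\<bar> \<le> L * \<bar>f s\<bar>"
    using mult_right_mono[OF coeff(1)[OF s] abs_ge_zero[of "f s"]] by (simp add: abs_mult algebra_simps)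
  moreover have "\<bar>a12 s * g s\<bar> \<le> L * \<bar>g s\<bar>"
    using mult_right_mono[OF coeff(2)[OF s] abs_ge_zero[of "g s"]] by (simp add: abs_mult)
  ultimately show "\<bar>a11 s * f s + a12 s * g s + r1 s\<bar> + \<bar>a21 s * f s + r2 s\<bar> \<le> L * (\<bar>f s\<bar> + \<bar>g s\<bar>) + c"
    using rem[OF s] by (simp add: algebra_simps) linarith
qed

lemma divide_split_affine:
  fixes u h A B X Y :: real
  shows "u / h = A * (X / h) + B * (Y / h) + (u - (A * X + B * Y)) / h"
    "u / h = A * (X / h) + (u - A * X) / h"
  by (simp_all add: diff_divide_distrib add_divide_distrib)

lemma supnorm_on_bound:
  fixes f :: "real \<Rightarrow> real"
  assumes "continuous_on {a..b} f" "a \<le> b"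
  shows "\<And>y. y \<in> {a..b} \<Longrightarrow> \<bar>f y\<bar> \<le> supnorm_on f a b" "supnorm_on f a b \<ge> 0"
proof -
  obtain B where "\<And>y. y \<in> {a..b} \<Longrightarrow> \<bar>f y\<bar> \<le> B"
    using continuous_on_Icc_abs_bounded[OF assms(1)] by blast
  then have bdd: "bdd_above ((\<lambda>x. \<bar>f x\<bar>) ` {a..b})" by (intro bdd_aboveI2[where M = B]) auto
  then show le: "\<bar>f y\<bar> \<le> supnorm_on f a b" if "y \<in> {a..b}" for y
    unfolding supnorm_on_def using that by (auto intro: cSup_upper)
  show "supnorm_on f a b \<ge> 0" using le[of a] assms(2) by (smt (verit) atLeastAtMost_iff)
qed

lemma continuous_on_zero_extension:
  fixes g :: "real \<Rightarrow> real"
  assumes "continuous_on {a..b} g" "g a = 0" "g b = 0"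
  shows "continuous_on S (\<lambda>y. if y \<in> {a..b} then g y else 0)"
proof -
  have "continuous_on ({a..b} \<union> - {a<..<b}) (\<lambda>y. if y \<in> {a..b} then g y else 0)"
    by (rule continuous_on_cases) (use assms in auto)
  moreover have "{a..b} \<union> - {a<..<b} = UNIV" by auto
  ultimately show ?thesis by (metis continuous_on_subset subset_UNIV)
qed

lemma continuous_on_Icc_nonzero_sign:
  fixes f :: "real \<Rightarrow> real"
  assumes f: "continuous_on {0..T} f" and nz: "\<And>s. s \<in> {0..T} \<Longrightarrow> f s \<noteq> 0" and t: "t \<in> {0..T}"
  shows "f 0 * f t > 0"
proof (rule ccontr)
  assume "\<not> f 0 * f t > 0"
  then have "f 0 \<le> 0 \<and> 0 \<le> f t \<or> 0 \<le> f 0 \<and> f t \<le> 0"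
    by (auto simp: mult_le_0_iff not_less)
  moreover have "continuous_on {0..t} f" using f by (rule continuous_on_subset) (use t in auto)
  moreover have "0 \<le> t" using t by simp
  ultimately have "\<exists>s. 0 \<le> s \<and> s \<le> t \<and> f s = 0"
    using IVT'[of f 0 0 t] IVT2'[of f t 0 0] by blast
  with nz t show False by auto
qed

lemma continuous_on_first_zero:
  fixes f :: "real \<Rightarrow> real"
  assumes "continuous_on {0..s} f" "\<exists>t\<in>{0..s}. f t = 0"
  obtains \<tau> where "\<tau> \<in> {0..s}" "f \<tau> = 0" "\<And>r. r \<in> {0..<\<tau>} \<Longrightarrow> f r \<noteq> 0"
proof -
  define Z where "Z = f -` {0} \<inter> {0..s}"
  have "closed Z"
    unfolding Z_def by (intro closed_vimage_Int assms(1) closed_atLeastAtMost closed_singleton)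
  moreover have "Z \<noteq> {}" "bdd_below Z" using assms(2) by (auto simp: Z_def)
  ultimately have "Inf Z \<in> Z" by (rule closed_contains_Inf[rotated 2])
  moreover have "f r \<noteq> 0" if "r \<in> {0..<Inf Z}" for r
  proof
    assume "f r = 0"
    with that \<open>Inf Z \<in> Z\<close> have "r \<in> Z" by (auto simp: Z_def)
    then have "Inf Z \<le> r" using \<open>bdd_below Z\<close> by (rule cInf_lower)
    with that show False by simp
  qed
  ultimately show ?thesis using that by (auto simp: Z_def)
qed

section \<open>The characteristic system\<close>

lemma ext_poly_altdef: "ext_poly q a b = (\<lambda>y. if y \<in> {a..b} then poly q y else 0)"
  by (auto simp: ext_poly_def)

lemma abs_ext_poly_le_supnorm:
  assumes "a \<le> b"
  shows "\<bar>ext_poly q a b y\<bar> \<le> supnorm_on (poly q) a b"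
proof -
  have "continuous_on {a..b} (poly q)" by (intro continuous_intros)
  from supnorm_on_bound[OF this assms] show ?thesis by (auto simp: ext_poly_def)
qed

lemma ext_poly_has_real_derivative:
  assumes "poly q a = 0" "poly q b = 0" "poly (pderiv q) a = 0" "poly (pderiv q) b = 0" "a \<le> b"
  shows "(ext_poly q a b has_real_derivative ext_poly (pderiv q) a b y) (at y)"
  unfolding ext_poly_altdef
  by (rule has_real_derivative_zero_extension) (use assms in \<open>auto intro: poly_DERIV\<close>)

text \<open>\<open>gap_const M * N\<close> bounds \<open>eta - w \<circ> xi\<close> up to time 1, \<open>coeff_const M * N\<close> the
  coefficients of the linearised system, and \<open>deriv_const M * N\<close> the final estimate.\<close>

definition gap_const :: "real \<Rightarrow> real" where
  "gap_const M = 2 * (1 + M\<^sup>2) * exp (2 * M + 1)"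

definition coeff_const :: "real \<Rightarrow> real" where
  "coeff_const M = M + gap_const M + 1"

definition deriv_const :: "real \<Rightarrow> real" where
  "deriv_const M = 2 * coeff_const M * (1 + M) * exp (2 * coeff_const M + 1)"

lemma deriv_const_nonneg: "0 \<le> M \<Longrightarrow> 0 \<le> deriv_const M"
  by (simp add: deriv_const_def coeff_const_def gap_const_def)

locale char_system =
  fixes w w1 w2 :: "real \<Rightarrow> real" and a b :: real and p :: "real poly"
    and xi eta :: "real \<Rightarrow> real \<Rightarrow> real" and M :: real
  assumes w_deriv: "\<And>y. (w has_real_derivative w1 y) (at y)"
    and w1_deriv: "\<And>y. (w1 has_real_derivative w2 y) (at y)"
    and w2_cont: "continuous_on UNIV w2"
    and a_gt: "-1 < a" and a_lt_b: "a < b" and b_lt: "b < 1"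
    and vanish: "\<And>k. k \<le> 2 \<Longrightarrow> poly ((pderiv ^^ k) p) a = 0 \<and> poly ((pderiv ^^ k) p) b = 0"
    and xi_deriv: "\<And>x t. ((\<lambda>t. xi t x) has_real_derivative
               (- w1 (xi t x) * ext_poly p a b (xi t x)
                - (eta t x - w (xi t x)) * ext_poly (pderiv p) a b (xi t x))) (at t)"
    and eta_deriv: "\<And>x t. ((\<lambda>t. eta t x) has_real_derivative ext_poly p a b (xi t x)) (at t)"
    and xi_init: "\<And>x. xi 0 x = x" and eta_init: "\<And>x. eta 0 x = w x"
    and w_norm: "C2norm_on w w1 w2 a b \<le> M"
    and phi_norm: "polyC2norm p a b \<le> 1"
begin

abbreviation "\<phi> \<equiv> ext_poly p a b"
abbreviation "\<phi>' \<equiv> ext_poly (pderiv p) a b"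
abbreviation "\<phi>'' \<equiv> ext_poly (pderiv (pderiv p)) a b"
abbreviation "N \<equiv> polyC2norm p a b"

abbreviation "F y e \<equiv> - w1 y * \<phi> y - (e - w y) * \<phi>' y"

lemma F_outside: "y \<in> - {a..b} \<Longrightarrow> F y e = 0"
  by (auto simp: ext_poly_def)

lemma phi_deriv: "(\<phi> has_real_derivative \<phi>' y) (at y)"
  and phi'_deriv: "(\<phi>' has_real_derivative \<phi>'' y) (at y)"
  using vanish[of 0] vanish[of 1] vanish[of 2] a_lt_b
  by (auto simp: numeral_eq_Suc intro!: ext_poly_has_real_derivative)

lemma continuous_phi: "continuous_on S \<phi>" "continuous_on S \<phi>'" "continuous_on S \<phi>''"
proof -
  show "continuous_on S \<phi>" "continuous_on S \<phi>'"
    using phi_deriv phi'_deriv by (meson DERIV_continuous continuous_at_imp_continuous_on)+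
  show "continuous_on S \<phi>''"
    using vanish[of 2] unfolding ext_poly_altdef
    by (intro continuous_on_zero_extension) (auto simp: numeral_eq_Suc intro: continuous_intros)
qed

lemma continuous_w: "continuous_on S w" "continuous_on S w1" "continuous_on S w2"
  using w_deriv w1_deriv continuous_on_subset[OF w2_cont]
  by (meson DERIV_continuous continuous_at_imp_continuous_on subset_UNIV)+

lemma phi_bounds: "\<bar>\<phi> y\<bar> \<le> N" "\<bar>\<phi>' y\<bar> \<le> N" "\<bar>\<phi>'' y\<bar> \<le> N" "0 \<le> N"
proof -
  have "continuous_on {a..b} (poly q)" for q :: "real poly" by (intro continuous_intros)
  note s = supnorm_on_bound[OF this less_imp_le[OF a_lt_b]]
  have N: "N = supnorm_on (poly p) a b + supnorm_on (poly (pderiv p)) a b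
      + supnorm_on (poly (pderiv (pderiv p))) a b"
    unfolding polyC2norm_def C2norm_on_def ..
  note e = abs_ext_poly_le_supnorm[OF less_imp_le[OF a_lt_b]]
  show "\<bar>\<phi> y\<bar> \<le> N" "\<bar>\<phi>' y\<bar> \<le> N" "\<bar>\<phi>'' y\<bar> \<le> N" "0 \<le> N"
    using e[of p y] e[of "pderiv p" y] e[of "pderiv (pderiv p)" y]
      s(2)[of p] s(2)[of "pderiv p"] s(2)[of "pderiv (pderiv p)"] unfolding N by linarith+
qed

lemma w_bounds:
  assumes "y \<in> {a..b}"
  shows "\<bar>w y\<bar> \<le> M" "\<bar>w1 y\<bar> \<le> M" "\<bar>w2 y\<bar> \<le> M"
proof -
  note s0 = supnorm_on_bound[OF continuous_w(1) less_imp_le[OF a_lt_b]]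
    and s1 = supnorm_on_bound[OF continuous_w(2) less_imp_le[OF a_lt_b]]
    and s2 = supnorm_on_bound[OF continuous_w(3) less_imp_le[OF a_lt_b]]
  show "\<bar>w y\<bar> \<le> M" "\<bar>w1 y\<bar> \<le> M" "\<bar>w2 y\<bar> \<le> M"
    using s0(1)[OF assms] s1(1)[OF assms] s2(1)[OF assms] s0(2) s1(2) s2(2) w_norm
    unfolding C2norm_on_def by linarith+
qed

lemma M_nonneg: "0 \<le> M"
  using w_bounds(1)[of a] a_lt_b by (auto intro: order_trans[OF abs_ge_zero])

lemma flow_outside:
  assumes x: "x \<notin> {a..b}" and "0 \<le> t"
  shows "xi t x = x" "eta t x = w x"
proof -
  have "xi s x = x" if "0 \<le> s" for s
    using stationary_while_in_open[where U = "- {a..b}", OF xi_deriv _ _ F_outside that] x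
    by (simp add: xi_init open_Compl)
  then show "xi t x = x" using \<open>0 \<le> t\<close> .
  obtain c where "min t 0 \<le> c" "c \<le> max t 0" "eta t x - eta 0 x = \<phi> (xi c x) * (t - 0)"
    using MVT_between[OF eta_deriv] by blast
  with \<open>0 \<le> t\<close> \<open>\<And>s. 0 \<le> s \<Longrightarrow> xi s x = x\<close> x show "eta t x = w x"
    by (auto simp: eta_init ext_poly_def)
qed

text \<open>Running the flow backwards from a point outside \<open>[a, b]\<close> does not move it.\<close>

lemma xi_in_interval:
  assumes x: "x \<in> {a..b}" and "0 \<le> t"
  shows "xi t x \<in> {a..b}"
proof (rule ccontr)
  assume out: "xi t x \<notin> {a..b}"
  define g where "g = (\<lambda>r. xi (t - r) x)"
  have dg: "(g has_real_derivative F (xi (t - r) x) (eta (t - r) x) * -1) (at r)" for r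
    unfolding g_def by (rule DERIV_chain2[OF xi_deriv]) (auto intro!: derivative_eq_intros)
  have "g t = g 0"
    by (rule stationary_while_in_open[where U = "- {a..b}", OF dg])
       (use out \<open>0 \<le> t\<close> F_outside in \<open>auto simp: g_def\<close>)
  with out x show False by (simp add: g_def xi_init)
qed

lemma eta_minus_w_le:
  assumes "0 \<le> t"
  shows "\<bar>eta t x - w x\<bar> \<le> N * t"
proof -
  obtain c where "eta t x - eta 0 x = \<phi> (xi c x) * (t - 0)"
    using MVT_between[OF eta_deriv] by metis
  then show ?thesis
    using mult_right_mono[OF phi_bounds(1) assms] assms by (simp add: eta_init abs_mult)
qed

lemma gap_deriv:
  "((\<lambda>t. eta t x - w (xi t x)) has_real_derivative \<phi> (xi t x) - w1 (xi t x) * F (xi t x) (eta t x)) (at t)"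
  by (intro DERIV_diff eta_deriv DERIV_chain2[OF w_deriv xi_deriv])

lemma phi_xi_deriv:
  "((\<lambda>t. \<phi> (xi t x)) has_real_derivative \<phi>' (xi t x) * F (xi t x) (eta t x)) (at t)"
  by (rule DERIV_chain2[OF phi_deriv xi_deriv])

lemma continuous_along_flow:
  "continuous_on S (\<lambda>t. xi t x)" "continuous_on S (\<lambda>t. eta t x)"
  "continuous_on S (\<lambda>t. \<phi> (xi t x))" "continuous_on S (\<lambda>t. eta t x - w (xi t x))"
  using xi_deriv eta_deriv phi_xi_deriv gap_deriv
  by (meson DERIV_continuous continuous_at_imp_continuous_on)+

lemma gap_bound:
  assumes x: "x \<in> {a..b}" and t: "t \<in> {0..1}"
  shows "\<bar>eta t x - w (xi t x)\<bar> \<le> gap_const M * N"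
proof -
  define u where "u = (\<lambda>t. eta t x - w (xi t x))"
  have bd: "\<bar>\<phi> (xi s x) - w1 (xi s x) * F (xi s x) (eta s x)\<bar> + \<bar>0\<bar>
      \<le> M * (\<bar>u s\<bar> + \<bar>0\<bar>) + (1 + M\<^sup>2) * N" if "s \<in> {0..1}" for s
  proof -
    have "xi s x \<in> {a..b}" using xi_in_interval[OF x] that by simp
    then have W: "\<bar>w1 (xi s x)\<bar> \<le> M" by (rule w_bounds)
    have "\<phi> (xi s x) - w1 (xi s x) * F (xi s x) (eta s x)
        = \<phi> (xi s x) + w1 (xi s x) * w1 (xi s x) * \<phi> (xi s x) + w1 (xi s x) * u s * \<phi>' (xi s x)"
      unfolding u_def by (simp add: algebra_simps)
    moreover have "\<bar>w1 (xi s x) * w1 (xi s x) * \<phi> (xi s x)\<bar> \<le> M * M * N"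
      unfolding abs_mult using W phi_bounds M_nonneg by (intro mult_mono) auto
    moreover have "\<bar>w1 (xi s x) * u s * \<phi>' (xi s x)\<bar> \<le> M * \<bar>u s\<bar> * 1"
      unfolding abs_mult using W order_trans[OF phi_bounds(2) phi_norm] M_nonneg
      by (intro mult_mono) auto
    ultimately show ?thesis using phi_bounds(1)[of "xi s x"] by (simp add: power2_eq_square algebra_simps)
  qed
  have "\<bar>u t\<bar> + \<bar>0\<bar> \<le> 2 * (\<bar>u 0\<bar> + \<bar>0\<bar> + (1 + M\<^sup>2) * N) * exp ((2 * M + 1) * t)"
    by (rule gronwall_abs_sum[OF _ DERIV_const bd M_nonneg _ t])
       (use phi_bounds(4) gap_deriv in \<open>auto simp: u_def\<close>)
  also have "\<dots> \<le> 2 * ((1 + M\<^sup>2) * N) * exp (2 * M + 1)"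
  proof -
    have "exp ((2 * M + 1) * t) \<le> exp (2 * M + 1)" using t M_nonneg by (simp add: mult_left_le)
    from mult_left_mono[OF mult_left_mono[OF this phi_bounds(4)], of "1 + M\<^sup>2"]
    show ?thesis by (simp add: u_def xi_init eta_init)
  qed
  finally show ?thesis by (simp add: u_def gap_const_def algebra_simps)
qed

subsection \<open>The first hitting time\<close>

text \<open>Along a trajectory, \<open>q = w1 * \<phi> + (eta - w) * \<phi>'\<close> is minus the velocity of \<open>xi\<close>, and
  the Wronskian of \<open>eta - w\<close> and \<open>\<phi>\<close> along the flow equals \<open>\<phi>\<^sup>2 + q\<^sup>2\<close>; hence the ratio
  \<open>(eta - w) / \<phi>\<close> grows at least at unit speed while \<open>\<phi>\<close> does not vanish.\<close>

lemma gap_ratio_ge_time: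
  assumes nz: "\<And>s. s \<in> {0..t} \<Longrightarrow> \<phi> (xi s x) \<noteq> 0" and "0 \<le> t"
  shows "t \<le> (eta t x - w (xi t x)) / \<phi> (xi t x)"
proof (cases "t = 0")
  case False
  then have "0 < t" using \<open>0 \<le> t\<close> by simp
  define u where "u = (\<lambda>s. eta s x - w (xi s x))"
  define \<psi> where "\<psi> = (\<lambda>s. \<phi> (xi s x))"
  define q where "q = (\<lambda>s. w1 (xi s x) * \<psi> s + u s * \<phi>' (xi s x))"
  have F: "F (xi s x) (eta s x) = - q s" for s by (simp add: q_def \<psi>_def u_def algebra_simps)
  define r' where "r' = (\<lambda>s. (\<psi> s * \<psi> s + q s * q s) / (\<psi> s * \<psi> s))"
  have "((\<lambda>s. u s / \<psi> s) has_real_derivative r' s) (at s)" if "0 \<le> s" "s \<le> t" for s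
  proof -
    have "((\<lambda>s. u s / \<psi> s) has_real_derivative
        ((\<psi> s - w1 (xi s x) * F (xi s x) (eta s x)) * \<psi> s
          - u s * (\<phi>' (xi s x) * F (xi s x) (eta s x))) / (\<psi> s * \<psi> s)) (at s)"
      using nz[of s] that unfolding u_def \<psi>_def by (intro DERIV_divide gap_deriv phi_xi_deriv) auto
    then show ?thesis unfolding F r'_def by (simp add: q_def algebra_simps)
  qed
  then obtain z where z: "0 < z" "z < t" "u t / \<psi> t - u 0 / \<psi> 0 = (t - 0) * r' z"
    using MVT2[OF \<open>0 < t\<close>] by blast
  have "\<psi> z \<noteq> 0" using nz[of z] z by (simp add: \<psi>_def)
  then have "r' z \<ge> 1" by (simp add: r'_def le_divide_eq)
  then have "t * 1 \<le> t * r' z" using \<open>0 < t\<close> by (intro mult_left_mono) auto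
  with z show ?thesis by (simp add: u_def \<psi>_def xi_init eta_init)
qed (simp add: xi_init eta_init)

lemma gap_sign_along_flow:
  assumes nz: "\<And>s. s \<in> {0..t} \<Longrightarrow> \<phi> (xi s x) \<noteq> 0" and "0 \<le> t"
  shows "\<phi> x * \<phi> (xi t x) > 0" "t * (\<phi> x * \<phi> (xi t x)) \<le> \<phi> x * (eta t x - w (xi t x))"
proof -
  show pos: "\<phi> x * \<phi> (xi t x) > 0"
    using continuous_on_Icc_nonzero_sign[OF continuous_along_flow(3) nz, of t] \<open>0 \<le> t\<close>
    by (simp add: xi_init)
  have "t * (\<phi> x * \<phi> (xi t x)) \<le> (eta t x - w (xi t x)) / \<phi> (xi t x) * (\<phi> x * \<phi> (xi t x))"
  proof (rule mult_right_mono)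
    show "t \<le> (eta t x - w (xi t x)) / \<phi> (xi t x)"
      by (rule gap_ratio_ge_time) (use nz \<open>0 \<le> t\<close> in auto)
  qed (use pos in simp)
  also have "\<dots> = \<phi> x * (eta t x - w (xi t x))"
    using nz[of t] \<open>0 \<le> t\<close> by simp
  finally show "t * (\<phi> x * \<phi> (xi t x)) \<le> \<phi> x * (eta t x - w (xi t x))" .
qed

lemma gap_nonneg_until_first_zero:
  assumes "0 < \<tau>" and nz: "\<And>r. r \<in> {0..<\<tau>} \<Longrightarrow> \<phi> (xi r x) \<noteq> 0"
  shows "\<phi> x * (eta \<tau> x - w (xi \<tau> x)) \<ge> 0"
proof (rule continuous_ge_on_closure[where S = "{0..<\<tau>}" and f = "\<lambda>t. \<phi> x * (eta t x - w (xi t x))"])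
  show "continuous_on (closure {0..<\<tau>}) (\<lambda>t. \<phi> x * (eta t x - w (xi t x)))"
    by (intro continuous_intros continuous_along_flow)
  show "\<tau> \<in> closure {0..<\<tau>}" using \<open>0 < \<tau>\<close> by simp
  fix y assume y: "y \<in> {0..<\<tau>}"
  then have "\<phi> (xi r x) \<noteq> 0" if "r \<in> {0..y}" for r
    using nz that by auto
  from gap_sign_along_flow[OF this] y show "\<phi> x * (eta y x - w (xi y x)) \<ge> 0"
    by (smt (verit) atLeastLessThan_iff mult_nonneg_nonneg)
qed

text \<open>\<open>\<phi> x * (eta - w \<circ> xi - s * \<phi> \<circ> xi)\<close> is \<open>\<le> 0\<close> at time 0 and \<open>\<ge> 0\<close> either at time
  \<open>s\<close> or at the first zero of \<open>\<phi> \<circ> xi\<close>, whichever comes first.\<close>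

lemma hitting_time_exists:
  assumes "0 \<le> s"
  obtains \<tau> where "0 \<le> \<tau>" "\<tau> \<le> s" "eta \<tau> x = w (xi \<tau> x) + s * \<phi> (xi \<tau> x)"
proof (cases "\<phi> x = 0 \<or> s = 0")
  case True
  then show ?thesis using that[of 0] assms by (auto simp: xi_init eta_init)
next
  case False
  then have "\<phi> x \<noteq> 0" by simp
  define k where "k = (\<lambda>t. \<phi> x * (eta t x - w (xi t x) - s * \<phi> (xi t x)))"
  have cont_k: "continuous_on S k" for S
    unfolding k_def by (intro continuous_intros continuous_along_flow)
  have "k 0 \<le> 0"
    using mult_nonneg_nonneg[OF assms zero_le_square[of "\<phi> x"]]
    by (simp add: k_def xi_init eta_init algebra_simps)
  obtain \<tau>1 where \<tau>1: "0 \<le> \<tau>1" "\<tau>1 \<le> s" "k \<tau>1 \<ge> 0"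
  proof (cases "\<forall>t\<in>{0..s}. \<phi> (xi t x) \<noteq> 0")
    case True
    then show ?thesis
      using that[of s] gap_sign_along_flow(2)[of s x] assms by (auto simp: k_def algebra_simps)
  next
    case False
    then obtain \<tau> where \<tau>: "\<tau> \<in> {0..s}" "\<phi> (xi \<tau> x) = 0"
      and before: "\<And>r. r \<in> {0..<\<tau>} \<Longrightarrow> \<phi> (xi r x) \<noteq> 0"
      using continuous_on_first_zero[OF continuous_along_flow(3)] by blast
    have "\<tau> \<noteq> 0" using \<tau> \<open>\<phi> x \<noteq> 0\<close> by (auto simp: xi_init)
    with \<tau>(1) have "\<phi> x * (eta \<tau> x - w (xi \<tau> x)) \<ge> 0"
      by (intro gap_nonneg_until_first_zero before) auto
    with \<tau> show ?thesis using that[of \<tau>] by (simp add: k_def)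
  qed
  then obtain \<tau> where "0 \<le> \<tau>" "\<tau> \<le> \<tau>1" "k \<tau> = 0"
    using IVT'[of k 0 0 \<tau>1, OF \<open>k 0 \<le> 0\<close> _ _ cont_k] by auto
  with \<open>\<phi> x \<noteq> 0\<close> \<tau>1 show ?thesis using that[of \<tau>] by (simp add: k_def)
qed

lemma first_time_le:
  assumes "0 \<le> s"
  shows "first_time xi eta w \<phi> s x \<le> s"
proof -
  obtain \<tau> where \<tau>: "0 \<le> \<tau>" "\<tau> \<le> s" "eta \<tau> x = w (xi \<tau> x) + s * \<phi> (xi \<tau> x)"
    using hitting_time_exists[OF assms] .
  then have "first_time xi eta w \<phi> s x \<le> \<tau>"
    unfolding first_time_def by (intro cInf_lower bdd_belowI[of _ 0]) auto
  with \<tau> show ?thesis by simp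
qed

subsection \<open>Lipschitz dependence on the initial point\<close>

text \<open>The vector field is affine in the second variable: \<open>F y e = F_const y + e * - \<phi>' y\<close>.\<close>

abbreviation "F_const y \<equiv> - w1 y * \<phi> y + w y * \<phi>' y"
abbreviation "F_const' y \<equiv> - w2 y * \<phi> y + w y * \<phi>'' y"

lemma F_const_deriv: "(F_const has_real_derivative F_const' y) (at y)"
proof -
  have "(F_const has_real_derivative - (w2 y * \<phi> y + w1 y * \<phi>' y) + (w1 y * \<phi>' y + w y * \<phi>'' y)) (at y)"
    using w_deriv w1_deriv phi_deriv phi'_deriv by (auto intro!: derivative_eq_intros)
  then show ?thesis by (simp add: algebra_simps)
qed

lemma minus_phi'_deriv: "((\<lambda>y. - \<phi>' y) has_real_derivative - \<phi>'' y) (at y)"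
  using phi'_deriv by (auto intro!: derivative_eq_intros)

lemma continuous_F_derivs: "continuous_on S F_const'" "continuous_on S (\<lambda>y. - \<phi>'' y)"
  using continuous_w continuous_phi by (auto intro!: continuous_intros)

lemma xi_in_box:
  assumes "y \<in> {-2..2}" "0 \<le> t"
  shows "xi t y \<in> {-2..2}"
proof (cases "y \<in> {a..b}")
  case True
  then show ?thesis using xi_in_interval[OF True assms(2)] a_gt b_lt by auto
qed (use flow_outside assms in auto)

lemma eta_box_bound:
  obtains R where "R \<ge> 0" "\<And>y t. y \<in> {-2..2} \<Longrightarrow> t \<in> {0..1} \<Longrightarrow> \<bar>eta t y\<bar> \<le> R"
proof -
  obtain B where "B \<ge> 0" and B: "\<And>y. y \<in> {-2..2} \<Longrightarrow> \<bar>w y\<bar> \<le> B"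
    using continuous_on_Icc_abs_bounded[OF continuous_w(1)] by blast
  have "\<bar>eta t y\<bar> \<le> B + 1" if "y \<in> {-2..2}" "t \<in> {0..1}" for y t
  proof -
    have "N * t \<le> 1 * 1" using that phi_bounds(4) phi_norm by (intro mult_mono) auto
    then show ?thesis using eta_minus_w_le[of t y] B[OF that(1)] that(2) by simp
  qed
  with \<open>B \<ge> 0\<close> show ?thesis by (intro that[of "B + 1"]) auto
qed

lemma vector_field_lipschitz:
  assumes "R \<ge> 0"
  obtains K where "K \<ge> 0" "\<And>y0 y1 e0 e1. y0 \<in> {-2..2} \<Longrightarrow> y1 \<in> {-2..2} \<Longrightarrow> \<bar>e1\<bar> \<le> R \<Longrightarrow>
    \<bar>F y1 e1 - F y0 e0\<bar> + \<bar>\<phi> y1 - \<phi> y0\<bar> \<le> K * (\<bar>y1 - y0\<bar> + \<bar>e1 - e0\<bar>)"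
proof -
  obtain LA where "LA \<ge> 0" and LA: "\<And>y z. y \<in> {-2..2} \<Longrightarrow> z \<in> {-2..2} \<Longrightarrow>
      \<bar>F_const y - F_const z\<bar> \<le> LA * \<bar>y - z\<bar>"
    using lipschitz_on_Icc_of_continuous_deriv[OF F_const_deriv continuous_F_derivs(1)] by blast
  obtain LB where "LB \<ge> 0" and LB: "\<And>y z. y \<in> {-2..2} \<Longrightarrow> z \<in> {-2..2} \<Longrightarrow>
      \<bar>\<phi>' y - \<phi>' z\<bar> \<le> LB * \<bar>y - z\<bar>"
    using lipschitz_on_Icc_of_continuous_deriv[OF phi'_deriv continuous_phi(3)] by blast
  obtain LP where "LP \<ge> 0" and LP: "\<And>y z. y \<in> {-2..2} \<Longrightarrow> z \<in> {-2..2} \<Longrightarrow>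
      \<bar>\<phi> y - \<phi> z\<bar> \<le> LP * \<bar>y - z\<bar>"
    using lipschitz_on_Icc_of_continuous_deriv[OF phi_deriv continuous_phi(2)] by blast
  define K where "K = LA + R * LB + LP + 1"
  have "K \<ge> 0" using \<open>LA \<ge> 0\<close> \<open>R \<ge> 0\<close> \<open>LB \<ge> 0\<close> \<open>LP \<ge> 0\<close> by (simp add: K_def)
  moreover have "\<bar>F y1 e1 - F y0 e0\<bar> + \<bar>\<phi> y1 - \<phi> y0\<bar> \<le> K * (\<bar>y1 - y0\<bar> + \<bar>e1 - e0\<bar>)"
    if y: "y0 \<in> {-2..2}" "y1 \<in> {-2..2}" and e1: "\<bar>e1\<bar> \<le> R" for y0 y1 e0 e1
  proof -
    have split: "F y1 e1 - F y0 e0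
        = (F_const y1 - F_const y0) - e1 * (\<phi>' y1 - \<phi>' y0) - (e1 - e0) * \<phi>' y0"
      by (simp add: algebra_simps)
    have "\<bar>F y1 e1 - F y0 e0\<bar>
        \<le> \<bar>F_const y1 - F_const y0\<bar> + \<bar>e1 * (\<phi>' y1 - \<phi>' y0)\<bar> + \<bar>(e1 - e0) * \<phi>' y0\<bar>"
      unfolding split by (rule order_trans[OF abs_triangle_ineq4 add_right_mono[OF abs_triangle_ineq4]])
    moreover have "\<bar>e1 * (\<phi>' y1 - \<phi>' y0)\<bar> \<le> R * (LB * \<bar>y1 - y0\<bar>)"
      unfolding abs_mult using e1 LB[OF y(2,1)] \<open>R \<ge> 0\<close> by (intro mult_mono) auto
    moreover have "\<bar>(e1 - e0) * \<phi>' y0\<bar> \<le> \<bar>e1 - e0\<bar> * 1"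
      unfolding abs_mult using order_trans[OF phi_bounds(2) phi_norm] by (intro mult_left_mono) auto
    ultimately have "\<bar>F y1 e1 - F y0 e0\<bar> \<le> LA * \<bar>y1 - y0\<bar> + R * (LB * \<bar>y1 - y0\<bar>) + \<bar>e1 - e0\<bar>"
      using LA[OF y(2,1)] by linarith
    moreover have "LA * \<bar>y1 - y0\<bar> + R * (LB * \<bar>y1 - y0\<bar>) + \<bar>e1 - e0\<bar> + LP * \<bar>y1 - y0\<bar>
        \<le> K * (\<bar>y1 - y0\<bar> + \<bar>e1 - e0\<bar>)"
      using \<open>LA \<ge> 0\<close> \<open>LB \<ge> 0\<close> \<open>LP \<ge> 0\<close> \<open>R \<ge> 0\<close>
      by (simp add: K_def algebra_simps add_nonneg_nonneg mult_nonneg_nonneg)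
    ultimately show ?thesis using LP[OF y(2,1)] by linarith
  qed
  ultimately show ?thesis by (rule that)
qed

lemma flow_lipschitz:
  obtains L where "L > 0" "\<And>y0 y1 t. y0 \<in> {-2..2} \<Longrightarrow> y1 \<in> {-2..2} \<Longrightarrow> t \<in> {0..1} \<Longrightarrow>
    \<bar>xi t y1 - xi t y0\<bar> + \<bar>eta t y1 - eta t y0\<bar> \<le> L * \<bar>y1 - y0\<bar>"
proof -
  obtain R where "R \<ge> 0" and R: "\<And>y t. y \<in> {-2..2} \<Longrightarrow> t \<in> {0..1} \<Longrightarrow> \<bar>eta t y\<bar> \<le> R"
    using eta_box_bound by blast
  obtain K where "K \<ge> 0" and K: "\<And>y0 y1 e0 e1. y0 \<in> {-2..2} \<Longrightarrow> y1 \<in> {-2..2} \<Longrightarrow> \<bar>e1\<bar> \<le> R \<Longrightarrow>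
      \<bar>F y1 e1 - F y0 e0\<bar> + \<bar>\<phi> y1 - \<phi> y0\<bar> \<le> K * (\<bar>y1 - y0\<bar> + \<bar>e1 - e0\<bar>)"
    using vector_field_lipschitz[OF \<open>R \<ge> 0\<close>] by blast
  obtain LW where "LW \<ge> 0" and LW: "\<And>y z. y \<in> {-2..2} \<Longrightarrow> z \<in> {-2..2} \<Longrightarrow>
      \<bar>w y - w z\<bar> \<le> LW * \<bar>y - z\<bar>"
    using lipschitz_on_Icc_of_continuous_deriv[OF w_deriv continuous_w(2)] by blast
  have "\<bar>xi t y1 - xi t y0\<bar> + \<bar>eta t y1 - eta t y0\<bar>
      \<le> (2 * (1 + LW) * exp (2 * K + 1)) * \<bar>y1 - y0\<bar>"
    if y: "y0 \<in> {-2..2}" "y1 \<in> {-2..2}" and t: "t \<in> {0..1}" for y0 y1 t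
  proof -
    define f where "f = (\<lambda>s. xi s y1 - xi s y0)"
    define g where "g = (\<lambda>s. eta s y1 - eta s y0)"
    have "(f has_real_derivative F (xi s y1) (eta s y1) - F (xi s y0) (eta s y0)) (at s)"
      "(g has_real_derivative \<phi> (xi s y1) - \<phi> (xi s y0)) (at s)" for s
      unfolding f_def g_def by (intro DERIV_diff xi_deriv eta_deriv)+
    moreover have "\<bar>F (xi s y1) (eta s y1) - F (xi s y0) (eta s y0)\<bar> + \<bar>\<phi> (xi s y1) - \<phi> (xi s y0)\<bar>
        \<le> K * (\<bar>f s\<bar> + \<bar>g s\<bar>) + 0" if s: "s \<in> {0..1}" for s
      unfolding f_def g_def using K xi_in_box[OF y(1)] xi_in_box[OF y(2)] R[OF y(2) s] s by simp
    ultimately have "\<bar>f t\<bar> + \<bar>g t\<bar> \<le> 2 * (\<bar>f 0\<bar> + \<bar>g 0\<bar> + 0) * exp ((2 * K + 1) * t)"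
      by (intro gronwall_abs_sum[of f _ g _ 1 K 0 t] \<open>K \<ge> 0\<close> t) auto
    also have "\<dots> \<le> 2 * ((1 + LW) * \<bar>y1 - y0\<bar>) * exp (2 * K + 1)"
    proof (rule mult_mono)
      show "exp ((2 * K + 1) * t) \<le> exp (2 * K + 1)" using t \<open>K \<ge> 0\<close> by (simp add: mult_left_le)
      show "2 * (\<bar>f 0\<bar> + \<bar>g 0\<bar> + 0) \<le> 2 * ((1 + LW) * \<bar>y1 - y0\<bar>)"
        using LW[OF y(2,1)] by (simp add: f_def g_def xi_init eta_init algebra_simps)
    qed (use \<open>LW \<ge> 0\<close> in auto)
    finally show ?thesis by (simp add: f_def g_def algebra_simps)
  qed
  moreover have "2 * (1 + LW) * exp (2 * K + 1) > 0" using \<open>LW \<ge> 0\<close> by simp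
  ultimately show ?thesis using that by blast
qed

end

section \<open>Differentiability in the initial point\<close>

locale char_system_at = char_system +
  fixes x :: real
  assumes x_in: "x \<in> {a..b}"
begin

text \<open>The Jacobian of the vector field \<open>(F, \<phi>)\<close> along the trajectory through \<open>x\<close>.\<close>

abbreviation "a11 t \<equiv> F_const' (xi t x) + eta t x * - \<phi>'' (xi t x)"
abbreviation "a12 t \<equiv> - \<phi>' (xi t x)"
abbreviation "a21 t \<equiv> \<phi>' (xi t x)"

lemma coeff_bounds:
  assumes t: "t \<in> {0..1}"
  shows "\<bar>a11 t\<bar> + \<bar>a21 t\<bar> \<le> coeff_const M * N" "\<bar>a12 t\<bar> \<le> coeff_const M * N"
proof -
  have xi: "xi t x \<in> {a..b}" using xi_in_interval[OF x_in] t by simp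
  have "\<bar>w2 (xi t x) * \<phi> (xi t x)\<bar> \<le> M * N"
    unfolding abs_mult using w_bounds(3)[OF xi] phi_bounds(1) M_nonneg by (intro mult_mono) auto
  moreover have "\<bar>(eta t x - w (xi t x)) * \<phi>'' (xi t x)\<bar> \<le> gap_const M * N * 1"
    unfolding abs_mult using gap_bound[OF x_in t] order_trans[OF phi_bounds(3) phi_norm]
    by (intro mult_mono) auto
  moreover have "a11 t = - w2 (xi t x) * \<phi> (xi t x) - (eta t x - w (xi t x)) * \<phi>'' (xi t x)"
    by (simp add: algebra_simps)
  ultimately show "\<bar>a11 t\<bar> + \<bar>a21 t\<bar> \<le> coeff_const M * N"
    using phi_bounds(2)[of "xi t x"] by (simp add: coeff_const_def algebra_simps)
  have "1 \<le> coeff_const M" using M_nonneg by (simp add: coeff_const_def gap_const_def)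
  from mult_right_mono[OF this phi_bounds(4)] phi_bounds(2)[of "xi t x"]
  show "\<bar>a12 t\<bar> \<le> coeff_const M * N" by simp
qed

abbreviation "dxi h t \<equiv> xi t (x + h) - xi t x"
abbreviation "deta h t \<equiv> eta t (x + h) - eta t x"
abbreviation "res_xi h t \<equiv> F (xi t (x + h)) (eta t (x + h)) - F (xi t x) (eta t x)
    - (a11 t * dxi h t + a12 t * deta h t)"
abbreviation "res_eta h t \<equiv> \<phi> (xi t (x + h)) - \<phi> (xi t x) - a21 t * dxi h t"

lemma linearization_residual_small:
  assumes "\<epsilon> > 0"
  obtains \<delta> where "\<delta> > 0" "\<And>h t. 0 < \<bar>h\<bar> \<Longrightarrow> \<bar>h\<bar> < \<delta> \<Longrightarrow> t \<in> {0..1} \<Longrightarrow>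
    \<bar>res_xi h t / h\<bar> + \<bar>res_eta h t / h\<bar> \<le> \<epsilon>"
proof -
  obtain L where "L > 0" and L: "\<And>y0 y1 t. y0 \<in> {-2..2} \<Longrightarrow> y1 \<in> {-2..2} \<Longrightarrow> t \<in> {0..1} \<Longrightarrow>
      \<bar>xi t y1 - xi t y0\<bar> + \<bar>eta t y1 - eta t y0\<bar> \<le> L * \<bar>y1 - y0\<bar>"
    using flow_lipschitz by blast
  obtain R where "R \<ge> 0" and R: "\<And>y t. y \<in> {-2..2} \<Longrightarrow> t \<in> {0..1} \<Longrightarrow> \<bar>eta t y\<bar> \<le> R"
    using eta_box_bound by blast
  define \<epsilon>' where "\<epsilon>' = \<epsilon> / (2 * L)"
  have "\<epsilon>' > 0" using \<open>\<epsilon> > 0\<close> \<open>L > 0\<close> by (simp add: \<epsilon>'_def)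
  obtain \<delta>1 where "\<delta>1 > 0" and \<delta>1: "\<And>y0 y1 e0 e1. y0 \<in> {-2..2} \<Longrightarrow> y1 \<in> {-2..2} \<Longrightarrow> \<bar>e0\<bar> \<le> R \<Longrightarrow>
      \<bar>y1 - y0\<bar> < \<delta>1 \<Longrightarrow>
      \<bar>(F_const y1 + e1 * - \<phi>' y1) - (F_const y0 + e0 * - \<phi>' y0)
        - ((F_const' y0 + e0 * - \<phi>'' y0) * (y1 - y0) + - \<phi>' y0 * (e1 - e0))\<bar>
        \<le> \<epsilon>' * (\<bar>y1 - y0\<bar> + \<bar>e1 - e0\<bar>)"
    using uniform_linearization_affine[OF F_const_deriv continuous_F_derivs(1) minus_phi'_deriv
        continuous_F_derivs(2) \<open>\<epsilon>' > 0\<close> \<open>R \<ge> 0\<close>] by blast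
  obtain \<delta>2 where "\<delta>2 > 0" and \<delta>2: "\<And>y0 y1 e0 e1. y0 \<in> {-2..2} \<Longrightarrow> y1 \<in> {-2..2} \<Longrightarrow>
      \<bar>e0\<bar> \<le> 0 \<Longrightarrow> \<bar>y1 - y0\<bar> < \<delta>2 \<Longrightarrow>
      \<bar>(\<phi> y1 + e1 * 0) - (\<phi> y0 + e0 * 0) - ((\<phi>' y0 + e0 * 0) * (y1 - y0) + 0 * (e1 - e0))\<bar>
        \<le> \<epsilon>' * (\<bar>y1 - y0\<bar> + \<bar>e1 - e0\<bar>)"
    using uniform_linearization_affine[OF phi_deriv continuous_phi(2) DERIV_const continuous_on_const
        \<open>\<epsilon>' > 0\<close> order_refl] by blast
  define \<delta> where "\<delta> = min 1 (min \<delta>1 \<delta>2 / L)"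
  have "\<delta> > 0" using \<open>\<delta>1 > 0\<close> \<open>\<delta>2 > 0\<close> \<open>L > 0\<close> by (simp add: \<delta>_def)
  moreover have "\<bar>res_xi h t / h\<bar> + \<bar>res_eta h t / h\<bar> \<le> \<epsilon>"
    if h: "0 < \<bar>h\<bar>" "\<bar>h\<bar> < \<delta>" and t: "t \<in> {0..1}" for h t
  proof -
    have box: "x \<in> {-2..2}" "x + h \<in> {-2..2}" using x_in a_gt b_lt h by (auto simp: \<delta>_def)
    then have xi_box: "xi t x \<in> {-2..2}" "xi t (x + h) \<in> {-2..2}" using xi_in_box t by auto
    have lip: "\<bar>dxi h t\<bar> + \<bar>deta h t\<bar> \<le> L * \<bar>h\<bar>" using L[OF box t] by simp
    also have "\<dots> < min \<delta>1 \<delta>2" using h \<open>L > 0\<close> by (simp add: \<delta>_def field_simps)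
    finally have close: "\<bar>dxi h t\<bar> < \<delta>1" "\<bar>dxi h t\<bar> < \<delta>2" by auto
    have "\<bar>res_xi h t\<bar> \<le> \<epsilon>' * (\<bar>dxi h t\<bar> + \<bar>deta h t\<bar>)"
      using \<delta>1[OF xi_box R[OF box(1) t] close(1), of "eta t (x + h)"] by (simp add: algebra_simps)
    moreover have "\<bar>res_eta h t\<bar> \<le> \<epsilon>' * (\<bar>dxi h t\<bar> + \<bar>deta h t\<bar>)"
    proof -
      have "\<bar>res_eta h t\<bar> \<le> \<epsilon>' * \<bar>dxi h t\<bar>" using \<delta>2[OF xi_box _ close(2), of 0 0] by simp
      also have "\<dots> \<le> \<epsilon>' * (\<bar>dxi h t\<bar> + \<bar>deta h t\<bar>)" using \<open>\<epsilon>' > 0\<close> by (simp add: mult_left_mono)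
      finally show ?thesis .
    qed
    ultimately have "\<bar>res_xi h t\<bar> + \<bar>res_eta h t\<bar> \<le> 2 * (\<epsilon>' * (L * \<bar>h\<bar>))"
      using mult_left_mono[OF lip, of \<epsilon>'] \<open>\<epsilon>' > 0\<close> by linarith
    also have "\<dots> = \<epsilon> * \<bar>h\<bar>" using \<open>L > 0\<close> by (simp add: \<epsilon>'_def)
    finally show ?thesis using h by (simp add: add_divide_distrib[symmetric] divide_le_eq)
  qed
  ultimately show ?thesis by (rule that)
qed

abbreviation "dq h t \<equiv> dxi h t / h"
abbreviation "eq h t \<equiv> deta h t / h"
abbreviation "qw h \<equiv> (w (x + h) - w x) / h"
abbreviation "growth \<equiv> exp (2 * coeff_const M + 1)"

lemma dq_deriv: "((\<lambda>t. dq h t) has_real_derivative a11 t * dq h t + a12 t * eq h t + res_xi h t / h) (at t)"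
proof -
  have "((\<lambda>t. dq h t) has_real_derivative (F (xi t (x + h)) (eta t (x + h)) - F (xi t x) (eta t x)) / h) (at t)"
    by (intro DERIV_cdivide DERIV_diff xi_deriv)
  then show ?thesis by (rule DERIV_cong) (rule divide_split_affine(1))
qed

lemma eq_deriv: "((\<lambda>t. eq h t) has_real_derivative a21 t * dq h t + res_eta h t / h) (at t)"
proof -
  have "((\<lambda>t. eq h t) has_real_derivative (\<phi> (xi t (x + h)) - \<phi> (xi t x)) / h) (at t)"
    by (intro DERIV_cdivide DERIV_diff eta_deriv)
  then show ?thesis by (rule DERIV_cong) (rule divide_split_affine(2))
qed

lemma linearized_gronwall:
  fixes f g rx re :: "real \<Rightarrow> real"
  assumes "\<And>t. (f has_real_derivative a11 t * f t + a12 t * g t + rx t) (at t)"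
    and "\<And>t. (g has_real_derivative a21 t * f t + re t) (at t)"
    and r: "\<And>t. t \<in> {0..1} \<Longrightarrow> \<bar>rx t\<bar> + \<bar>re t\<bar> \<le> c" and t: "t \<in> {0..1}"
  shows "\<bar>f t\<bar> + \<bar>g t\<bar> \<le> 2 * (\<bar>f 0\<bar> + \<bar>g 0\<bar> + c) * growth"
proof -
  have "\<bar>f t\<bar> + \<bar>g t\<bar> \<le> 2 * (\<bar>f 0\<bar> + \<bar>g 0\<bar> + c) * exp ((2 * (coeff_const M * N) + 1) * t)"
    by (rule linear_system_gronwall[OF assms(1,2) coeff_bounds(1) coeff_bounds(2) r t])
  also have "\<dots> \<le> 2 * (\<bar>f 0\<bar> + \<bar>g 0\<bar> + c) * growth"
  proof (rule mult_left_mono)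
    have "coeff_const M * N \<le> coeff_const M * 1"
      using phi_norm M_nonneg by (intro mult_left_mono) (auto simp: coeff_const_def gap_const_def)
    moreover have "0 \<le> coeff_const M * N" using coeff_bounds(2)[of 0] by (smt (verit) atLeastAtMost_iff)
    ultimately show "exp ((2 * (coeff_const M * N) + 1) * t) \<le> growth"
      using t by (simp add: mult_left_le order_trans[OF mult_left_le])
    show "0 \<le> 2 * (\<bar>f 0\<bar> + \<bar>g 0\<bar> + c)" using r[of 0] by simp
  qed
  finally show ?thesis .
qed

lemma w_quotient_close:
  assumes "e > 0"
  obtains \<delta> where "\<delta> > 0" "\<And>h. 0 < \<bar>h\<bar> \<Longrightarrow> \<bar>h\<bar> < \<delta> \<Longrightarrow> \<bar>qw h - w1 x\<bar> < e"
proof -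
  have "(qw \<longlongrightarrow> w1 x) (at 0)" using DERIV_D[OF w_deriv] .
  then have "eventually (\<lambda>h. dist (qw h) (w1 x) < e) (at 0)" using assms by (rule tendstoD)
  then obtain d where "d > 0" "\<And>h. h \<noteq> 0 \<Longrightarrow> dist h 0 < d \<Longrightarrow> dist (qw h) (w1 x) < e"
    unfolding eventually_at by auto
  then show ?thesis using that[of d] by (auto simp: dist_real_def)
qed

lemma quotients_Cauchy:
  assumes "\<epsilon> > 0"
  obtains \<delta> where "\<delta> > 0" "\<And>h k t. 0 < \<bar>h\<bar> \<Longrightarrow> \<bar>h\<bar> < \<delta> \<Longrightarrow> 0 < \<bar>k\<bar> \<Longrightarrow> \<bar>k\<bar> < \<delta> \<Longrightarrow> t \<in> {0..1} \<Longrightarrow>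
     \<bar>dq h t - dq k t\<bar> + \<bar>eq h t - eq k t\<bar> \<le> \<epsilon>"
proof -
  define e where "e = \<epsilon> / (8 * growth)"
  have "e > 0" using assms by (simp add: e_def)
  obtain \<delta>1 where "\<delta>1 > 0" and \<delta>1: "\<And>h t. 0 < \<bar>h\<bar> \<Longrightarrow> \<bar>h\<bar> < \<delta>1 \<Longrightarrow> t \<in> {0..1} \<Longrightarrow>
      \<bar>res_xi h t / h\<bar> + \<bar>res_eta h t / h\<bar> \<le> e"
    using linearization_residual_small[OF \<open>e > 0\<close>] by blast
  obtain \<delta>2 where "\<delta>2 > 0" and \<delta>2: "\<And>h. 0 < \<bar>h\<bar> \<Longrightarrow> \<bar>h\<bar> < \<delta>2 \<Longrightarrow> \<bar>qw h - w1 x\<bar> < e"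
    using w_quotient_close[OF \<open>e > 0\<close>] by blast
  have "\<bar>dq h t - dq k t\<bar> + \<bar>eq h t - eq k t\<bar> \<le> \<epsilon>"
    if h: "0 < \<bar>h\<bar>" "\<bar>h\<bar> < min \<delta>1 \<delta>2" and k: "0 < \<bar>k\<bar>" "\<bar>k\<bar> < min \<delta>1 \<delta>2" and t: "t \<in> {0..1}"
    for h k t
  proof -
    have regroup: "(A * X1 + B * Y1 + R1) - (A * X2 + B * Y2 + R2) = A * (X1 - X2) + B * (Y1 - Y2) + (R1 - R2)"
      "(A * X1 + R1) - (A * X2 + R2) = A * (X1 - X2) + (R1 - R2)" for A B X1 X2 Y1 Y2 R1 R2 :: real
      by (simp_all add: algebra_simps)
    have "\<bar>dq h t - dq k t\<bar> + \<bar>eq h t - eq k t\<bar>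
        \<le> 2 * (\<bar>dq h 0 - dq k 0\<bar> + \<bar>eq h 0 - eq k 0\<bar> + 2 * e) * growth"
    proof (rule linearized_gronwall[where rx = "\<lambda>s. res_xi h s / h - res_xi k s / k"
          and re = "\<lambda>s. res_eta h s / h - res_eta k s / k", OF _ _ _ t])
      show "((\<lambda>t. dq h t - dq k t) has_real_derivative
          a11 s * (dq h s - dq k s) + a12 s * (eq h s - eq k s) + (res_xi h s / h - res_xi k s / k)) (at s)"
        for s by (rule DERIV_cong[OF DERIV_diff[OF dq_deriv dq_deriv]]) (rule regroup(1))
      show "((\<lambda>t. eq h t - eq k t) has_real_derivative
          a21 s * (dq h s - dq k s) + (res_eta h s / h - res_eta k s / k)) (at s)"
        for s by (rule DERIV_cong[OF DERIV_diff[OF eq_deriv eq_deriv]]) (rule regroup(2))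
      fix s :: real assume s: "s \<in> {0..1}"
      have "\<bar>res_xi h s / h\<bar> + \<bar>res_eta h s / h\<bar> \<le> e" "\<bar>res_xi k s / k\<bar> + \<bar>res_eta k s / k\<bar> \<le> e"
        using \<delta>1[of h s] \<delta>1[of k s] h k s by auto
      then show "\<bar>res_xi h s / h - res_xi k s / k\<bar> + \<bar>res_eta h s / h - res_eta k s / k\<bar> \<le> 2 * e"
        using abs_triangle_ineq4[of "res_xi h s / h" "res_xi k s / k"]
          abs_triangle_ineq4[of "res_eta h s / h" "res_eta k s / k"] by linarith
    qed
    also have "\<dots> \<le> 2 * (4 * e) * growth"
    proof -
      have "\<bar>qw h - w1 x\<bar> < e" "\<bar>qw k - w1 x\<bar> < e" using \<delta>2 h k by auto
      then show ?thesis using h k by (simp add: xi_init eta_init)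
    qed
    also have "\<dots> = \<epsilon>" by (simp add: e_def)
    finally show ?thesis .
  qed
  moreover have "min \<delta>1 \<delta>2 > 0" using \<open>\<delta>1 > 0\<close> \<open>\<delta>2 > 0\<close> by simp
  ultimately show ?thesis using that by blast
qed

lemma quotients_near_identity:
  assumes "h \<noteq> 0" and res: "\<And>t. t \<in> {0..1} \<Longrightarrow> \<bar>res_xi h t / h\<bar> + \<bar>res_eta h t / h\<bar> \<le> e"
    and t: "t \<in> {0..1}"
  shows "\<bar>dq h t - 1\<bar> + \<bar>eq h t - qw h\<bar> \<le> 2 * (coeff_const M * N * (1 + \<bar>qw h\<bar>) + e) * growth"
proof -
  have recentre: "(A * X + B * Y + R) - 0 = A * (X - 1) + B * (Y - q) + (A + B * q + R)"
    "(A * X + R) - 0 = A * (X - 1) + (A + R)" for A B X Y R q :: real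
    by (simp_all add: algebra_simps)
  have "\<bar>dq h t - 1\<bar> + \<bar>eq h t - qw h\<bar>
      \<le> 2 * (\<bar>dq h 0 - 1\<bar> + \<bar>eq h 0 - qw h\<bar> + (coeff_const M * N * (1 + \<bar>qw h\<bar>) + e)) * growth"
  proof (rule linearized_gronwall[where rx = "\<lambda>s. a11 s + a12 s * qw h + res_xi h s / h"
        and re = "\<lambda>s. a21 s + res_eta h s / h", OF _ _ _ t])
    show "((\<lambda>t. dq h t - 1) has_real_derivative
        a11 s * (dq h s - 1) + a12 s * (eq h s - qw h) + (a11 s + a12 s * qw h + res_xi h s / h)) (at s)"
      for s by (rule DERIV_cong[OF DERIV_diff[OF dq_deriv DERIV_const]]) (rule recentre(1))
    show "((\<lambda>t. eq h t - qw h) has_real_derivative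
        a21 s * (dq h s - 1) + (a21 s + res_eta h s / h)) (at s)"
      for s by (rule DERIV_cong[OF DERIV_diff[OF eq_deriv DERIV_const]]) (rule recentre(2))
    fix s :: real assume s: "s \<in> {0..1}"
    have "\<bar>a12 s * qw h\<bar> \<le> coeff_const M * N * \<bar>qw h\<bar>"
      unfolding abs_mult by (rule mult_right_mono[OF coeff_bounds(2)[OF s]]) simp
    moreover have "coeff_const M * N * (1 + \<bar>qw h\<bar>) = coeff_const M * N + coeff_const M * N * \<bar>qw h\<bar>"
      by (simp add: algebra_simps)
    ultimately show "\<bar>a11 s + a12 s * qw h + res_xi h s / h\<bar> + \<bar>a21 s + res_eta h s / h\<bar>
        \<le> coeff_const M * N * (1 + \<bar>qw h\<bar>) + e"
      using coeff_bounds(1)[OF s] res[OF s] abs_triangle_ineq[of "a21 s" "res_eta h s / h"]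
        abs_triangle_ineq[of "a11 s + a12 s * qw h" "res_xi h s / h"] abs_triangle_ineq[of "a11 s" "a12 s * qw h"]
      by linarith
  qed
  then show ?thesis using \<open>h \<noteq> 0\<close> by (simp add: xi_init eta_init)
qed

lemma quotients_converge:
  assumes t: "t \<in> {0..1}"
  obtains D E where "((\<lambda>h. dq h t) \<longlongrightarrow> D) (at 0)" "((\<lambda>h. eq h t) \<longlongrightarrow> E) (at 0)"
proof -
  have Cauchy:
    "\<exists>d>0. \<forall>h k. 0 < \<bar>h\<bar> \<longrightarrow> \<bar>h\<bar> < d \<longrightarrow> 0 < \<bar>k\<bar> \<longrightarrow> \<bar>k\<bar> < d \<longrightarrow> \<bar>dq h t - dq k t\<bar> < e"
    "\<exists>d>0. \<forall>h k. 0 < \<bar>h\<bar> \<longrightarrow> \<bar>h\<bar> < d \<longrightarrow> 0 < \<bar>k\<bar> \<longrightarrow> \<bar>k\<bar> < d \<longrightarrow> \<bar>eq h t - eq k t\<bar> < e"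
    if "e > 0" for e
  proof -
    have "e / 2 > 0" using \<open>e > 0\<close> by simp
    then obtain d where "d > 0" and d: "\<And>h k s. 0 < \<bar>h\<bar> \<Longrightarrow> \<bar>h\<bar> < d \<Longrightarrow> 0 < \<bar>k\<bar> \<Longrightarrow> \<bar>k\<bar> < d \<Longrightarrow>
        s \<in> {0..1} \<Longrightarrow> \<bar>dq h s - dq k s\<bar> + \<bar>eq h s - eq k s\<bar> \<le> e / 2"
      using quotients_Cauchy by blast
    have "\<bar>dq h t - dq k t\<bar> < e" "\<bar>eq h t - eq k t\<bar> < e"
      if "0 < \<bar>h\<bar>" "\<bar>h\<bar> < d" "0 < \<bar>k\<bar>" "\<bar>k\<bar> < d" for h k
      using d[OF that t] \<open>e > 0\<close> by linarith+
    with \<open>d > 0\<close> show "\<exists>d>0. \<forall>h k. 0 < \<bar>h\<bar> \<longrightarrow> \<bar>h\<bar> < d \<longrightarrow> 0 < \<bar>k\<bar> \<longrightarrow> \<bar>k\<bar> < d \<longrightarrow> \<bar>dq h t - dq k t\<bar> < e"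
      "\<exists>d>0. \<forall>h k. 0 < \<bar>h\<bar> \<longrightarrow> \<bar>h\<bar> < d \<longrightarrow> 0 < \<bar>k\<bar> \<longrightarrow> \<bar>k\<bar> < d \<longrightarrow> \<bar>eq h t - eq k t\<bar> < e"
      by blast+
  qed
  obtain D where "((\<lambda>h. dq h t) \<longlongrightarrow> D) (at 0)"
    by (rule convergent_at_0_Cauchy) (rule Cauchy(1))
  moreover obtain E where "((\<lambda>h. eq h t) \<longlongrightarrow> E) (at 0)"
    by (rule convergent_at_0_Cauchy) (rule Cauchy(2))
  ultimately show ?thesis by (rule that)
qed

lemma flow_deriv_at:
  assumes t: "t \<in> {0..1}"
  obtains D E where "((\<lambda>y. xi t y) has_real_derivative D) (at x)"
    "((\<lambda>y. eta t y) has_real_derivative E) (at x)"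
    "\<bar>D - 1\<bar> + \<bar>E - w1 x\<bar> \<le> 2 * (coeff_const M * N * (1 + \<bar>w1 x\<bar>)) * growth"
proof -
  obtain D E where D: "((\<lambda>h. dq h t) \<longlongrightarrow> D) (at 0)" and E: "((\<lambda>h. eq h t) \<longlongrightarrow> E) (at 0)"
    using quotients_converge[OF t] by blast
  have qw: "(qw \<longlongrightarrow> w1 x) (at 0)" using DERIV_D[OF w_deriv] .
  have "\<bar>D - 1\<bar> + \<bar>E - w1 x\<bar> \<le> 2 * (coeff_const M * N * (1 + \<bar>w1 x\<bar>)) * growth"
  proof (rule field_le_epsilon)
    fix \<epsilon> :: real assume "\<epsilon> > 0"
    define e where "e = \<epsilon> / (2 * growth)"
    have "e > 0" using \<open>\<epsilon> > 0\<close> by (simp add: e_def)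
    then obtain \<delta> where "\<delta> > 0" and \<delta>: "\<And>h s. 0 < \<bar>h\<bar> \<Longrightarrow> \<bar>h\<bar> < \<delta> \<Longrightarrow> s \<in> {0..1} \<Longrightarrow>
        \<bar>res_xi h s / h\<bar> + \<bar>res_eta h s / h\<bar> \<le> e"
      using linearization_residual_small by blast
    have "\<bar>dq h t - 1\<bar> + \<bar>eq h t - qw h\<bar> \<le> 2 * (coeff_const M * N * (1 + \<bar>qw h\<bar>) + e) * growth"
      if "h \<noteq> 0" "dist h 0 < \<delta>" for h
      using that \<delta>[of h] by (intro quotients_near_identity t) (auto simp: dist_real_def)
    then have ev: "eventually (\<lambda>h. \<bar>dq h t - 1\<bar> + \<bar>eq h t - qw h\<bar>
        \<le> 2 * (coeff_const M * N * (1 + \<bar>qw h\<bar>) + e) * growth) (at 0)"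
      unfolding eventually_at using \<open>\<delta> > 0\<close> by blast
    have lim_quot: "((\<lambda>h. \<bar>dq h t - 1\<bar> + \<bar>eq h t - qw h\<bar>) \<longlongrightarrow> \<bar>D - 1\<bar> + \<bar>E - w1 x\<bar>) (at 0)"
      by (intro tendsto_intros D E qw)
    have lim_bound: "((\<lambda>h. 2 * (coeff_const M * N * (1 + \<bar>qw h\<bar>) + e) * growth)
          \<longlongrightarrow> 2 * (coeff_const M * N * (1 + \<bar>w1 x\<bar>) + e) * growth) (at 0)"
      by (intro tendsto_intros qw)
    have "\<bar>D - 1\<bar> + \<bar>E - w1 x\<bar> \<le> 2 * (coeff_const M * N * (1 + \<bar>w1 x\<bar>) + e) * growth"
      by (rule tendsto_le[OF _ lim_bound lim_quot ev]) simp
    also have "\<dots> = 2 * (coeff_const M * N * (1 + \<bar>w1 x\<bar>)) * growth + \<epsilon>"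
      by (simp add: e_def distrib_left distrib_right)
    finally show "\<bar>D - 1\<bar> + \<bar>E - w1 x\<bar> \<le> 2 * (coeff_const M * N * (1 + \<bar>w1 x\<bar>)) * growth + \<epsilon>" .
  qed
  with D E show ?thesis using that unfolding DERIV_def by blast
qed

end

lemma (in char_system) flow_derivative_estimate:
  assumes t: "t \<in> {0..1}"
  obtains D E where "((\<lambda>y. xi t y) has_real_derivative D) (at x)" "\<bar>D - 1\<bar> \<le> deriv_const M * N"
    "((\<lambda>y. eta t y) has_real_derivative E) (at x)" "\<bar>E - w1 x\<bar> \<le> deriv_const M * N"
proof (cases "x \<in> {a..b}")
  case True
  interpret char_system_at w w1 w2 a b p xi eta M x
    by unfold_locales (rule True)
  obtain D E where DE: "((\<lambda>y. xi t y) has_real_derivative D) (at x)"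
    "((\<lambda>y. eta t y) has_real_derivative E) (at x)"
    "\<bar>D - 1\<bar> + \<bar>E - w1 x\<bar> \<le> 2 * (coeff_const M * N * (1 + \<bar>w1 x\<bar>)) * growth"
    using flow_deriv_at[OF t] by blast
  have "0 \<le> coeff_const M * N"
    using M_nonneg phi_bounds(4) by (simp add: coeff_const_def gap_const_def)
  then have "coeff_const M * N * (1 + \<bar>w1 x\<bar>) \<le> coeff_const M * N * (1 + M)"
    using w_bounds(2)[OF True] by (simp add: mult_left_mono)
  from mult_right_mono[OF mult_left_mono[OF this, of 2], of growth]
  have "2 * (coeff_const M * N * (1 + \<bar>w1 x\<bar>)) * growth \<le> 2 * (coeff_const M * N * (1 + M)) * growth"
    by simp
  also have "\<dots> = deriv_const M * N" by (simp add: deriv_const_def algebra_simps)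
  finally have "2 * (coeff_const M * N * (1 + \<bar>w1 x\<bar>)) * growth \<le> deriv_const M * N" .
  with DE show ?thesis using that[of D E] by simp
next
  case False
  have U: "open (- {a..b})" "x \<in> - {a..b}" using False by auto
  have "((\<lambda>y. xi t y) has_real_derivative 1) (at x)"
    by (rule has_field_derivative_transform_within_open[OF DERIV_ident U])
       (use flow_outside(1)[of _ t] t in auto)
  moreover have "((\<lambda>y. eta t y) has_real_derivative w1 x) (at x)"
    by (rule has_field_derivative_transform_within_open[OF w_deriv U])
       (use flow_outside(2)[of _ t] t in auto)
  moreover have "0 \<le> deriv_const M * N" using deriv_const_nonneg[OF M_nonneg] phi_bounds(4) by simp
  ultimately show ?thesis using that by simp
qed

text \<open>Taking \<open>max 1\<close> only makes \<open>C\<close> positive when \<open>M < 0\<close>, in which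
  case the hypotheses are contradictory.\<close>

theorem proposition3p7:
  fixes M :: real
  shows "\<exists>C>0. \<forall>(w::real\<Rightarrow>real) w1 w2 w3 (a::real) b (p::real poly)
            (xi::real\<Rightarrow>real\<Rightarrow>real) (eta::real\<Rightarrow>real\<Rightarrow>real).
     (\<forall>x. (w has_real_derivative w1 x) (at x)) \<longrightarrow>
     (\<forall>x. (w1 has_real_derivative w2 x) (at x)) \<longrightarrow>
     (\<forall>x. (w2 has_real_derivative w3 x) (at x)) \<longrightarrow>
     continuous_on UNIV w3 \<longrightarrow>
     (\<exists>T>0. \<forall>x. w (x + T) = w x) \<longrightarrow>
     (\<forall>x\<in>{-1..1}. w x > 0) \<longrightarrow>
     -1 < a \<longrightarrow> a < b \<longrightarrow> b < 1 \<longrightarrow>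
     (\<forall>k\<le>3. poly ((pderiv ^^ k) p) a = 0 \<and> poly ((pderiv ^^ k) p) b = 0) \<longrightarrow>
     (\<forall>x t. ((\<lambda>t. xi t x) has_real_derivative
               (- w1 (xi t x) * ext_poly p a b (xi t x)
                - (eta t x - w (xi t x)) * ext_poly (pderiv p) a b (xi t x))) (at t)) \<longrightarrow>
     (\<forall>x t. ((\<lambda>t. eta t x) has_real_derivative ext_poly p a b (xi t x)) (at t)) \<longrightarrow>
     (\<forall>x. xi 0 x = x \<and> eta 0 x = w x) \<longrightarrow>
     C2norm_on w w1 w2 a b \<le> M \<longrightarrow>
     polyC2norm p a b < 1 \<longrightarrow>
     (\<forall>s\<in>{0..1}. \<forall>x. \<forall>t. 0 \<le> t \<and> t \<le> first_time xi eta w (ext_poly p a b) s x \<longrightarrow>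
        (\<exists>D. ((\<lambda>y. xi t y) has_real_derivative D) (at x) \<and>
             \<bar>D - 1\<bar> \<le> C * polyC2norm p a b) \<and>
        (\<exists>E. ((\<lambda>y. eta t y) has_real_derivative E) (at x) \<and>
             \<bar>E - w1 x\<bar> \<le> C * polyC2norm p a b))"
proof (rule exI[of _ "max 1 (deriv_const M)"], intro conjI allI impI ballI)
  fix w w1 w2 w3 a b p xi eta s x t
  assume w: "\<forall>x. (w has_real_derivative w1 x) (at x)" "\<forall>x. (w1 has_real_derivative w2 x) (at x)"
      "\<forall>x. (w2 has_real_derivative w3 x) (at x)"
    and "continuous_on UNIV w3" "\<exists>T>0. \<forall>x. w (x + T) = w x" "\<forall>x\<in>{-1..1}. w x > 0"
    and ab: "-1 < a" "a < b" "b < 1"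
    and vanish: "\<forall>k\<le>3. poly ((pderiv ^^ k) p) a = 0 \<and> poly ((pderiv ^^ k) p) b = 0"
    and flow: "\<forall>x t. ((\<lambda>t. xi t x) has_real_derivative
               (- w1 (xi t x) * ext_poly p a b (xi t x)
                - (eta t x - w (xi t x)) * ext_poly (pderiv p) a b (xi t x))) (at t)"
      "\<forall>x t. ((\<lambda>t. eta t x) has_real_derivative ext_poly p a b (xi t x)) (at t)"
      "\<forall>x. xi 0 x = x \<and> eta 0 x = w x"
    and norms: "C2norm_on w w1 w2 a b \<le> M" "polyC2norm p a b < 1"
    and s: "s \<in> {0..1}" and t: "0 \<le> t \<and> t \<le> first_time xi eta w (ext_poly p a b) s x"
  interpret char_system w w1 w2 a b p xi eta M
  proof
    show "continuous_on UNIV w2"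
      using w(3) by (meson DERIV_continuous continuous_at_imp_continuous_on)
    show "poly ((pderiv ^^ k) p) a = 0 \<and> poly ((pderiv ^^ k) p) b = 0" if "k \<le> 2" for k
      using vanish that by simp
    show "polyC2norm p a b \<le> 1" using norms(2) by simp
  qed (use w ab flow norms(1) in blast)+
  have "t \<in> {0..1}" using t first_time_le[of s x] s by auto
  then obtain D E where "((\<lambda>y. xi t y) has_real_derivative D) (at x)" "\<bar>D - 1\<bar> \<le> deriv_const M * N"
    "((\<lambda>y. eta t y) has_real_derivative E) (at x)" "\<bar>E - w1 x\<bar> \<le> deriv_const M * N"
    by (rule flow_derivative_estimate)
  moreover have "deriv_const M * N \<le> max 1 (deriv_const M) * N"
    using phi_bounds(4) by (simp add: mult_right_mono)
  ultimately show "\<exists>D. ((\<lambda>y. xi t y) has_real_derivative D) (at x) \<and> \<bar>D - 1\<bar> \<le> max 1 (deriv_const M) * N"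
    "\<exists>E. ((\<lambda>y. eta t y) has_real_derivative E) (at x) \<and> \<bar>E - w1 x\<bar> \<le> max 1 (deriv_const M) * N"
    by (meson order_trans)+
qed simp

end
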